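(* Let $\Omega=\mathbb{T}^d$ ($d=2$ or $3$), $\nu>\kappa>0$, $\mu=\nu-\sqrt{\nu^{2}-\kappa^{2}}$, $\lambda=\sqrt{\nu^{2}-\kappa^{2}}$. Let $(\varrho_n,u_n)$ be a smooth solution, with $\varrho_n>0$, of $$\partial_{t}\varrho+\mathrm{div}(\varrho u)=0,\qquad \partial_{t}(\varrho u)+\mathrm{div}(\varrho u\otimes u)-2\nu\,\mathrm{div}(\varrho D(u))=2\kappa^2\varrho\nabla\Big(\frac{\Delta\sqrt{\varrho}}{\sqrt{\varrho}}\Big)$$ on $\Omega$, and let $w_n=u_n+\mu\nabla\log\varrho_n$. Then $$\frac{d}{dt}\int_{\Omega}\varrho_{n}\frac{|w_{n}|^{2}}{2}dx+2\lambda\int_{\Omega}\varrho_{n}|Dw_{n}|^{2}dx+\mu\int_{\Omega}\varrho_{n}|\nabla w_{n}|^{2}dx=0.$$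
   Context: $D(w)=(\nabla w+\nabla^{t}w)/2$. *)

theory Defs
  imports "HOL-Analysis.Analysis"
begin

definition dirder :: "('a::real_normed_vector \<Rightarrow> 'b::real_normed_vector) \<Rightarrow> 'a \<Rightarrow> 'a \<Rightarrow> 'b" where
  "dirder f v = (\<lambda>z. frechet_derivative f (at z) v)"

definition smooth_on :: "'a::real_normed_vector set \<Rightarrow> ('a \<Rightarrow> 'b::real_normed_vector) \<Rightarrow> bool" where
  "smooth_on S f \<longleftrightarrow> open S \<and>
     (\<forall>vs. \<forall>z\<in>S. (fold (\<lambda>v g. dirder g v) vs f) differentiable (at z))"

definition pd :: "'n::finite \<Rightarrow> (real^'n \<Rightarrow> real) \<Rightarrow> real^'n \<Rightarrow> real" where
  "pd i f x = deriv (\<lambda>s. f (x + s *\<^sub>R axis i 1)) 0"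

definition dt :: "(real \<Rightarrow> real^'n \<Rightarrow> real) \<Rightarrow> real \<Rightarrow> real^'n \<Rightarrow> real" where
  "dt f t x = deriv (\<lambda>s. f s x) t"

definition lap :: "(real^'n::finite \<Rightarrow> real) \<Rightarrow> real^'n \<Rightarrow> real" where
  "lap f x = (\<Sum>i\<in>UNIV. pd i (pd i f) x)"

definition grad :: "(real^'n::finite \<Rightarrow> real) \<Rightarrow> real^'n \<Rightarrow> real^'n" where
  "grad f x = (\<chi> i. pd i f x)"

definition symgrad :: "(real^'n::finite \<Rightarrow> real^'n) \<Rightarrow> 'n \<Rightarrow> 'n \<Rightarrow> real^'n \<Rightarrow> real" where
  "symgrad v i j x = (pd j (\<lambda>y. v y $ i) x + pd i (\<lambda>y. v y $ j) x) / 2"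

(* the unit cell [0,1]^d, a fundamental domain of the torus T^d *)
definition unit_cell :: "(real^'n::finite) set" where
  "unit_cell = cbox 0 (\<chi> i. 1)"

(* spatially 1-periodic in every coordinate, i.e. a function on T^d *)
definition periodic_field :: "(real^'n::finite \<Rightarrow> 'b) \<Rightarrow> bool" where
  "periodic_field f \<longleftrightarrow> (\<forall>x i. f (x + axis i 1) = f x)"

end

theory Submission
  imports Defs
begin

text \<open>By the mass equation \<open>\<partial>\<^sub>t(\<rho> \<nabla>log \<rho>) = \<nabla>\<partial>\<^sub>t\<rho> = -\<nabla>div(\<rho> u)\<close>, and
  the quantum term is a divergence, \<open>2 \<rho> \<nabla>(\<Delta>\<surd>\<rho> / \<surd>\<rho>) = div(\<rho> \<nabla>\<^sup>2log \<rho>)\<close>; adding \<open>\<mu>\<close> times the first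
  identity to the momentum equation puts \<open>\<rho> w\<close> in conservation form \<open>\<partial>\<^sub>t(\<rho> w\<^sub>i) = \<partial>\<^sub>j X\<^sub>i\<^sub>j\<close>.
  Testing with \<open>w\<close>, using the mass equation again and integrating by parts over the unit cell
  (the cell integral of a derivative of a periodic function vanishes), the time derivative of
  \<open>\<integral> \<rho> |w|\<^sup>2/2\<close> is minus the integral of \<open>\<partial>\<^sub>jw\<^sub>i X\<^sub>i\<^sub>j + \<partial>\<^sub>j(|w|\<^sup>2/2) \<rho> u\<^sub>j\<close>. Since \<open>\<mu>\<close> is a root of
  \<open>\<mu>\<^sup>2 - 2\<nu>\<mu> + \<kappa>\<^sup>2\<close>, the Hessian of \<open>log \<rho>\<close> drops out of this integrand, which becomes
  \<open>2\<lambda> \<rho> |Dw|\<^sup>2 + \<mu> \<rho> |\<nabla>w|\<^sup>2\<close> with \<open>\<lambda> = \<nu> - \<mu>\<close> up to a term that sums to zero by antisymmetry.\<close>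
section \<open>Directional derivatives\<close>

lemma dirder_eqI:
  assumes "(f has_derivative f') (at z)"
  shows "dirder f v z = f' v"
  using assms by (metis dirder_def frechet_derivative_at)

lemma has_derivative_dirder:
  assumes "f differentiable at z"
  shows "(f has_derivative (\<lambda>v. dirder f v z)) (at z)"
  using assms frechet_derivative_works[of f "at z"] unfolding dirder_def by simp

lemma dirder_cong_open:
  assumes "open X" "z \<in> X" "\<And>y. y \<in> X \<Longrightarrow> f y = g y" "f differentiable at z"
  shows "dirder f v z = dirder g v z"
  unfolding dirder_def using frechet_derivative_transform_within_open[OF assms(4,1,2)] assms(3) by simp

lemma differentiable_cong_open:
  assumes "open X" "z \<in> X" "\<And>y. y \<in> X \<Longrightarrow> f y = g y" "f differentiable at z"
  shows "g differentiable at z"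
  using assms by (meson differentiable_def has_derivative_transform_within_open)

lemma dirder_const: "dirder (\<lambda>z. c) v z = 0"
  by (rule dirder_eqI) (rule has_derivative_const)

lemma dirder_add:
  assumes "f differentiable at z" "g differentiable at z"
  shows "dirder (\<lambda>z. f z + g z) v z = dirder f v z + dirder g v z"
  by (rule dirder_eqI, rule has_derivative_eq_rhs,
      rule has_derivative_add[OF has_derivative_dirder[OF assms(1)] has_derivative_dirder[OF assms(2)]]) simp

lemma dirder_diff:
  assumes "f differentiable at z" "g differentiable at z"
  shows "dirder (\<lambda>z. f z - g z) v z = dirder f v z - dirder g v z"
  by (rule dirder_eqI, rule has_derivative_eq_rhs,
      rule has_derivative_diff[OF has_derivative_dirder[OF assms(1)] has_derivative_dirder[OF assms(2)]]) simp

lemma dirder_minus: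
  assumes "f differentiable at z"
  shows "dirder (\<lambda>z. - f z) v z = - dirder f v z"
  by (rule dirder_eqI, rule has_derivative_eq_rhs,
      rule has_derivative_minus[OF has_derivative_dirder[OF assms]]) simp

lemma dirder_mult:
  fixes f g :: "'a::real_normed_vector \<Rightarrow> real"
  assumes "f differentiable at z" "g differentiable at z"
  shows "dirder (\<lambda>z. f z * g z) v z = f z * dirder g v z + dirder f v z * g z"
  by (rule dirder_eqI, rule has_derivative_eq_rhs,
      rule has_derivative_mult[OF has_derivative_dirder[OF assms(1)] has_derivative_dirder[OF assms(2)]]) simp

lemma dirder_cmult:
  fixes f :: "'a::real_normed_vector \<Rightarrow> real"
  assumes "f differentiable at z"
  shows "dirder (\<lambda>z. c * f z) v z = c * dirder f v z"
  by (rule dirder_eqI, rule has_derivative_eq_rhs,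
      rule has_derivative_mult_right[OF has_derivative_dirder[OF assms]]) simp

lemma dirder_sum:
  fixes f :: "'i \<Rightarrow> 'a::real_normed_vector \<Rightarrow> real"
  assumes "\<And>i. i \<in> A \<Longrightarrow> f i differentiable at z"
  shows "dirder (\<lambda>z. \<Sum>i\<in>A. f i z) v z = (\<Sum>i\<in>A. dirder (f i) v z)"
  by (rule dirder_eqI, rule has_derivative_eq_rhs,
      rule has_derivative_sum[OF has_derivative_dirder[OF assms]]) simp_all

lemmas dirder_arith = dirder_const dirder_add dirder_diff dirder_minus dirder_mult dirder_sum

lemma dirder_divide:
  fixes f g :: "'a::real_normed_vector \<Rightarrow> real"
  assumes "f differentiable at z" "g differentiable at z" "g z \<noteq> 0"
  shows "dirder (\<lambda>z. f z / g z) v z = (dirder f v z * g z - f z * dirder g v z) / (g z)\<^sup>2"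
  by (rule dirder_eqI, rule has_derivative_eq_rhs,
      rule has_derivative_divide[OF has_derivative_dirder[OF assms(1)] has_derivative_dirder[OF assms(2)] assms(3)])
     (use assms(3) in \<open>auto simp: fun_eq_iff field_simps power2_eq_square\<close>)

lemma dirder_inverse:
  fixes f :: "'a::real_normed_vector \<Rightarrow> real"
  assumes "f differentiable at z" "f z \<noteq> 0"
  shows "dirder (\<lambda>z. inverse (f z)) v z = - (inverse (f z) * inverse (f z) * dirder f v z)"
  by (rule dirder_eqI, rule has_derivative_eq_rhs,
      rule Deriv.has_derivative_inverse[OF assms(2) has_derivative_dirder[OF assms(1)]]) (simp add: mult_ac)

lemma dirder_ln:
  fixes f :: "'a::real_normed_vector \<Rightarrow> real"
  assumes "f differentiable at z" "f z > 0"
  shows "dirder (\<lambda>z. ln (f z)) v z = dirder f v z / f z"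
  by (rule dirder_eqI, rule has_derivative_eq_rhs,
      rule has_derivative_ln[OF assms(2) has_derivative_dirder[OF assms(1)]]) (simp add: field_simps)

lemma dirder_sqrt:
  fixes f :: "'a::real_normed_vector \<Rightarrow> real"
  assumes "f differentiable at z" "f z > 0"
  shows "dirder (\<lambda>z. sqrt (f z)) v z = dirder f v z / (2 * sqrt (f z))"
  by (rule dirder_eqI, rule has_derivative_eq_rhs,
      rule has_derivative_real_sqrt[OF assms(2) has_derivative_dirder[OF assms(1)]]) (simp add: field_simps)

lemma dirder_component:
  fixes f :: "'a::real_normed_vector \<Rightarrow> real^'n"
  assumes "f differentiable at z"
  shows "dirder (\<lambda>z. f z $ i) v z = dirder f v z $ i"
  by (rule dirder_eqI, rule has_derivative_eq_rhs,
      rule bounded_linear.has_derivative[OF bounded_linear_vec_nth has_derivative_dirder[OF assms]]) simp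

lemma differentiable_sqrt:
  fixes f :: "'a::real_normed_vector \<Rightarrow> real"
  shows "f differentiable at z \<Longrightarrow> f z > 0 \<Longrightarrow> (\<lambda>z. sqrt (f z)) differentiable at z"
  using has_derivative_real_sqrt[OF _ has_derivative_dirder] differentiable_def by blast

lemma differentiable_ln:
  fixes f :: "'a::real_normed_vector \<Rightarrow> real"
  shows "f differentiable at z \<Longrightarrow> f z > 0 \<Longrightarrow> (\<lambda>z. ln (f z)) differentiable at z"
  using has_derivative_ln[OF _ has_derivative_dirder] differentiable_def by blast

lemma differentiable_component:
  fixes f :: "'a::real_normed_vector \<Rightarrow> real^'n"
  shows "f differentiable at z \<Longrightarrow> (\<lambda>z. f z $ i) differentiable at z"
  using bounded_linear.has_derivative[OF bounded_linear_vec_nth has_derivative_dirder] differentiable_def by blast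

lemma has_real_derivative_dirder_line:
  assumes "h differentiable at (c + s *\<^sub>R v)"
  shows "((\<lambda>s. h (c + s *\<^sub>R v)) has_real_derivative dirder h v (c + s *\<^sub>R v)) (at s)"
proof -
  have hd: "(h has_derivative (\<lambda>p. dirder h p (c + s *\<^sub>R v))) (at (c + s *\<^sub>R v))"
    by (rule has_derivative_dirder[OF assms])
  have "((\<lambda>s. c + s *\<^sub>R v) has_derivative (\<lambda>t. t *\<^sub>R v)) (at s)"
    by (auto intro!: derivative_eq_intros)
  from has_derivative_compose[OF this hd]
  have "((\<lambda>s. h (c + s *\<^sub>R v)) has_derivative (\<lambda>t. dirder h (t *\<^sub>R v) (c + s *\<^sub>R v))) (at s)"
    by (simp add: o_def)
  moreover have "dirder h (t *\<^sub>R v) (c + s *\<^sub>R v) = t * dirder h v (c + s *\<^sub>R v)" for t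
    using linear_cmul[OF bounded_linear.linear[OF has_derivative_bounded_linear[OF hd]]] by simp
  ultimately show ?thesis
    unfolding has_field_derivative_def by (simp add: mult.commute[of _ "dirder h v (c + s *\<^sub>R v)"])
qed

section \<open>Smooth functions\<close>

text \<open>Note the offset: \<open>differentiable_upto S k f\<close> means that \<open>f\<close> is \<open>k + 1\<close> times differentiable
  on \<open>S\<close>.\<close>

fun differentiable_upto :: "'a::real_normed_vector set \<Rightarrow> nat \<Rightarrow> ('a \<Rightarrow> 'b::real_normed_vector) \<Rightarrow> bool" where
  "differentiable_upto S 0 f \<longleftrightarrow> (\<forall>z\<in>S. f differentiable at z)"
| "differentiable_upto S (Suc k) f \<longleftrightarrow>
     (\<forall>z\<in>S. f differentiable at z) \<and> (\<forall>v. differentiable_upto S k (dirder f v))"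

lemma differentiable_upto_iff_fold:
  "differentiable_upto S k f \<longleftrightarrow>
     (\<forall>vs. length vs \<le> k \<longrightarrow> (\<forall>z\<in>S. fold (\<lambda>v g. dirder g v) vs f differentiable at z))"
proof (induction k arbitrary: f)
  case 0
  then show ?case by auto
next
  case (Suc k)
  show ?case
  proof
    assume H: "differentiable_upto S (Suc k) f"
    show "\<forall>vs. length vs \<le> Suc k \<longrightarrow> (\<forall>z\<in>S. fold (\<lambda>v g. dirder g v) vs f differentiable at z)"
    proof (intro allI impI)
      fix vs :: "'a list" assume "length vs \<le> Suc k"
      then show "\<forall>z\<in>S. fold (\<lambda>v g. dirder g v) vs f differentiable at z"
        using H Suc.IH by (cases vs) auto
    qed
  next
    assume H: "\<forall>vs. length vs \<le> Suc k \<longrightarrow> (\<forall>z\<in>S. fold (\<lambda>v g. dirder g v) vs f differentiable at z)"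
    have "\<forall>z\<in>S. f differentiable at z" using H[rule_format, of "[]"] by simp
    moreover have "differentiable_upto S k (dirder f v)" for v
      unfolding Suc.IH using H[rule_format, of "v # _"] by auto
    ultimately show "differentiable_upto S (Suc k) f" by simp
  qed
qed

lemma smooth_on_iff_differentiable_upto:
  "smooth_on S f \<longleftrightarrow> open S \<and> (\<forall>k. differentiable_upto S k f)"
  unfolding smooth_on_def differentiable_upto_iff_fold by blast

lemma differentiable_upto_differentiable:
  "differentiable_upto S k f \<Longrightarrow> z \<in> S \<Longrightarrow> f differentiable at z"
  by (cases k) auto

lemma differentiable_upto_Suc_imp: "differentiable_upto S (Suc k) f \<Longrightarrow> differentiable_upto S k f"
  by (induction k arbitrary: f) auto

lemma differentiable_upto_cong:
  assumes "open S" "differentiable_upto S k f" "\<And>z. z \<in> S \<Longrightarrow> f z = g z"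
  shows "differentiable_upto S k g"
  using assms(2,3)
proof (induction k arbitrary: f g)
  case 0
  then show ?case using differentiable_cong_open[OF assms(1)] by (metis differentiable_upto.simps(1))
next
  case (Suc k)
  have "\<forall>z\<in>S. g differentiable at z"
    using differentiable_cong_open[OF assms(1)] Suc.prems by (metis differentiable_upto.simps(2))
  moreover have "differentiable_upto S k (dirder g v)" for v
  proof (rule Suc.IH)
    show "differentiable_upto S k (dirder f v)" using Suc.prems by simp
    show "dirder f v z = dirder g v z" if "z \<in> S" for z
      using dirder_cong_open[OF assms(1) that, of f g] Suc.prems that by simp
  qed
  ultimately show ?case by simp
qed

lemma differentiable_upto_const: "differentiable_upto S k (\<lambda>z. c)"
proof (induction k arbitrary: c)
  case (Suc k)
  have e: "dirder (\<lambda>z. c) v = (\<lambda>z. 0)" for v by (rule ext) (rule dirder_const)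
  have "differentiable_upto S k (dirder (\<lambda>z. c) v)" for v unfolding e by (rule Suc.IH)
  then show ?case by simp
qed simp

context
  fixes S :: "'a::real_normed_vector set"
  assumes S: "open S"
begin

lemma differentiable_upto_add:
  fixes f g :: "'a \<Rightarrow> real"
  shows "differentiable_upto S k f \<Longrightarrow> differentiable_upto S k g \<Longrightarrow> differentiable_upto S k (\<lambda>z. f z + g z)"
proof (induction k arbitrary: f g)
  case (Suc k)
  have "differentiable_upto S k (dirder (\<lambda>z. f z + g z) v)" for v
  proof (rule differentiable_upto_cong[OF S])
    show "differentiable_upto S k (\<lambda>z. dirder f v z + dirder g v z)" using Suc by simp
    show "dirder f v z + dirder g v z = dirder (\<lambda>z. f z + g z) v z" if "z \<in> S" for z
      using dirder_add[of f z g v] Suc.prems that by simp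
  qed
  then show ?case using Suc.prems by auto
qed auto

lemma differentiable_upto_minus:
  fixes f :: "'a \<Rightarrow> real"
  shows "differentiable_upto S k f \<Longrightarrow> differentiable_upto S k (\<lambda>z. - f z)"
proof (induction k arbitrary: f)
  case (Suc k)
  have "differentiable_upto S k (dirder (\<lambda>z. - f z) v)" for v
  proof (rule differentiable_upto_cong[OF S])
    show "differentiable_upto S k (\<lambda>z. - dirder f v z)" using Suc by simp
    show "- dirder f v z = dirder (\<lambda>z. - f z) v z" if "z \<in> S" for z
      using dirder_minus[of f z v] Suc.prems that by simp
  qed
  then show ?case using Suc.prems by auto
qed auto

lemma differentiable_upto_mult:
  fixes f g :: "'a \<Rightarrow> real"
  shows "differentiable_upto S k f \<Longrightarrow> differentiable_upto S k g \<Longrightarrow> differentiable_upto S k (\<lambda>z. f z * g z)"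
proof (induction k arbitrary: f g)
  case (Suc k)
  have "differentiable_upto S k (dirder (\<lambda>z. f z * g z) v)" for v
  proof (rule differentiable_upto_cong[OF S])
    show "differentiable_upto S k (\<lambda>z. f z * dirder g v z + dirder f v z * g z)"
      using Suc differentiable_upto_Suc_imp differentiable_upto_add by (metis differentiable_upto.simps(2))
    show "f z * dirder g v z + dirder f v z * g z = dirder (\<lambda>z. f z * g z) v z" if "z \<in> S" for z
      using dirder_mult[of f z g v] Suc.prems that by simp
  qed
  then show ?case using Suc.prems by auto
qed auto

lemma differentiable_upto_sum:
  fixes f :: "'i \<Rightarrow> 'a \<Rightarrow> real"
  assumes "finite A" "\<And>i. i \<in> A \<Longrightarrow> differentiable_upto S k (f i)"
  shows "differentiable_upto S k (\<lambda>z. \<Sum>i\<in>A. f i z)"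
  using assms
  by (induction A rule: finite_induct) (simp_all add: differentiable_upto_const differentiable_upto_add)

lemma differentiable_upto_inverse:
  fixes f :: "'a \<Rightarrow> real"
  shows "differentiable_upto S k f \<Longrightarrow> (\<And>z. z \<in> S \<Longrightarrow> f z \<noteq> 0) \<Longrightarrow>
    differentiable_upto S k (\<lambda>z. inverse (f z))"
proof (induction k arbitrary: f)
  case (Suc k)
  have "differentiable_upto S k (dirder (\<lambda>z. inverse (f z)) v)" for v
  proof (rule differentiable_upto_cong[OF S])
    have "differentiable_upto S k (\<lambda>z. inverse (f z))"
      using Suc differentiable_upto_Suc_imp by blast
    then show "differentiable_upto S k (\<lambda>z. - (inverse (f z) * inverse (f z) * dirder f v z))"
      using Suc.prems by (auto intro!: differentiable_upto_minus differentiable_upto_mult)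
    show "- (inverse (f z) * inverse (f z) * dirder f v z) = dirder (\<lambda>z. inverse (f z)) v z" if "z \<in> S" for z
      using dirder_inverse[of f z v] Suc.prems that by simp
  qed
  then show ?case using Suc.prems by auto
qed auto

lemma differentiable_upto_ln:
  fixes f :: "'a \<Rightarrow> real"
  assumes "differentiable_upto S k f" "\<And>z. z \<in> S \<Longrightarrow> f z > 0"
  shows "differentiable_upto S k (\<lambda>z. ln (f z))"
proof (cases k)
  case 0
  then show ?thesis using assms by (auto intro!: differentiable_ln)
next
  case (Suc m)
  have "differentiable_upto S m (dirder (\<lambda>z. ln (f z)) v)" for v
  proof (rule differentiable_upto_cong[OF S])
    have "differentiable_upto S m (\<lambda>z. inverse (f z))"
      using assms Suc differentiable_upto_Suc_imp differentiable_upto_inverse by (metis less_irrefl)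
    then show "differentiable_upto S m (\<lambda>z. dirder f v z * inverse (f z))"
      using assms Suc by (auto intro!: differentiable_upto_mult)
    show "dirder f v z * inverse (f z) = dirder (\<lambda>z. ln (f z)) v z" if "z \<in> S" for z
      using dirder_ln[of f z v] assms Suc that by (auto simp: field_simps)
  qed
  then show ?thesis using assms Suc by (auto intro!: differentiable_ln)
qed

lemma differentiable_upto_sqrt:
  fixes f :: "'a \<Rightarrow> real"
  shows "differentiable_upto S k f \<Longrightarrow> (\<And>z. z \<in> S \<Longrightarrow> f z > 0) \<Longrightarrow>
    differentiable_upto S k (\<lambda>z. sqrt (f z))"
proof (induction k arbitrary: f)
  case (Suc k)
  have "differentiable_upto S k (dirder (\<lambda>z. sqrt (f z)) v)" for v
  proof (rule differentiable_upto_cong[OF S])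
    have "differentiable_upto S k (\<lambda>z. sqrt (f z))"
      using Suc differentiable_upto_Suc_imp by blast
    then have "differentiable_upto S k (\<lambda>z. inverse (sqrt (f z)))"
      using differentiable_upto_inverse Suc.prems by force
    then show "differentiable_upto S k (\<lambda>z. 1/2 * (inverse (sqrt (f z)) * dirder f v z))"
      using Suc.prems by (intro differentiable_upto_mult differentiable_upto_const) auto
    show "1/2 * (inverse (sqrt (f z)) * dirder f v z) = dirder (\<lambda>z. sqrt (f z)) v z" if "z \<in> S" for z
      using dirder_sqrt[of f z v] Suc.prems that by (auto simp: field_simps)
  qed
  then show ?case using Suc.prems by (auto intro!: differentiable_sqrt)
qed (auto intro!: differentiable_sqrt)

lemma differentiable_upto_component:
  fixes f :: "'a \<Rightarrow> real^'n"
  shows "differentiable_upto S k f \<Longrightarrow> differentiable_upto S k (\<lambda>z. f z $ i)"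
proof (induction k arbitrary: f)
  case (Suc k)
  have "differentiable_upto S k (dirder (\<lambda>z. f z $ i) v)" for v
  proof (rule differentiable_upto_cong[OF S])
    show "differentiable_upto S k (\<lambda>z. dirder f v z $ i)" using Suc by auto
    show "dirder f v z $ i = dirder (\<lambda>z. f z $ i) v z" if "z \<in> S" for z
      using dirder_component[of f z i v] Suc.prems that by auto
  qed
  then show ?case using Suc.prems by (auto intro!: differentiable_component)
qed (auto intro!: differentiable_component)

end

lemma smooth_on_open: "smooth_on S f \<Longrightarrow> open S"
  unfolding smooth_on_def by blast

lemma smooth_on_differentiable: "smooth_on S f \<Longrightarrow> z \<in> S \<Longrightarrow> f differentiable at z"
  unfolding smooth_on_iff_differentiable_upto using differentiable_upto_differentiable by blast

lemma smooth_on_continuous_on: "smooth_on S f \<Longrightarrow> A \<subseteq> S \<Longrightarrow> continuous_on A f"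
  by (meson continuous_at_imp_continuous_on differentiable_imp_continuous_within smooth_on_differentiable subsetD)

lemma smooth_on_dirder: "smooth_on S f \<Longrightarrow> smooth_on S (dirder f v)"
  unfolding smooth_on_iff_differentiable_upto by (metis differentiable_upto.simps(2))

lemma smooth_on_const: "open S \<Longrightarrow> smooth_on S (\<lambda>z. c)"
  unfolding smooth_on_iff_differentiable_upto by (simp add: differentiable_upto_const)

lemma smooth_on_add: "smooth_on S f \<Longrightarrow> smooth_on S g \<Longrightarrow> smooth_on S (\<lambda>z. f z + g z :: real)"
  unfolding smooth_on_iff_differentiable_upto using differentiable_upto_add by blast

lemma smooth_on_minus: "smooth_on S f \<Longrightarrow> smooth_on S (\<lambda>z. - f z :: real)"
  unfolding smooth_on_iff_differentiable_upto using differentiable_upto_minus by blast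

lemma smooth_on_diff: "smooth_on S f \<Longrightarrow> smooth_on S g \<Longrightarrow> smooth_on S (\<lambda>z. f z - g z :: real)"
  using smooth_on_add[of S f "\<lambda>z. - g z"] smooth_on_minus[of S g] by simp

lemma smooth_on_mult: "smooth_on S f \<Longrightarrow> smooth_on S g \<Longrightarrow> smooth_on S (\<lambda>z. f z * g z :: real)"
  unfolding smooth_on_iff_differentiable_upto using differentiable_upto_mult by blast

lemma smooth_on_cmult: "smooth_on S f \<Longrightarrow> smooth_on S (\<lambda>z. c * f z :: real)"
  by (intro smooth_on_mult smooth_on_const smooth_on_open)

lemma smooth_on_sum:
  "finite A \<Longrightarrow> (\<And>i. i \<in> A \<Longrightarrow> smooth_on S (f i)) \<Longrightarrow> open S \<Longrightarrow> smooth_on S (\<lambda>z. \<Sum>i\<in>A. f i z :: real)"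
  unfolding smooth_on_iff_differentiable_upto using differentiable_upto_sum by blast

lemma smooth_on_inverse:
  "smooth_on S f \<Longrightarrow> (\<And>z. z \<in> S \<Longrightarrow> f z \<noteq> 0) \<Longrightarrow> smooth_on S (\<lambda>z. inverse (f z) :: real)"
  unfolding smooth_on_iff_differentiable_upto using differentiable_upto_inverse by blast

lemma smooth_on_divide:
  "smooth_on S f \<Longrightarrow> smooth_on S g \<Longrightarrow> (\<And>z. z \<in> S \<Longrightarrow> g z \<noteq> 0) \<Longrightarrow> smooth_on S (\<lambda>z. f z / g z :: real)"
  using smooth_on_mult[of S f "\<lambda>z. inverse (g z)"] smooth_on_inverse[of S g] by (simp add: divide_inverse)

lemma smooth_on_ln: "smooth_on S f \<Longrightarrow> (\<And>z. z \<in> S \<Longrightarrow> f z > 0) \<Longrightarrow> smooth_on S (\<lambda>z. ln (f z) :: real)"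
  unfolding smooth_on_iff_differentiable_upto using differentiable_upto_ln by blast

lemma smooth_on_sqrt: "smooth_on S f \<Longrightarrow> (\<And>z. z \<in> S \<Longrightarrow> f z > 0) \<Longrightarrow> smooth_on S (\<lambda>z. sqrt (f z) :: real)"
  unfolding smooth_on_iff_differentiable_upto using differentiable_upto_sqrt by blast

lemma smooth_on_component: "smooth_on S f \<Longrightarrow> smooth_on S (\<lambda>z. f z $ i :: real)"
  unfolding smooth_on_iff_differentiable_upto using differentiable_upto_component by blast

lemmas smooth_on_intros =
  smooth_on_dirder smooth_on_add smooth_on_minus smooth_on_diff smooth_on_mult smooth_on_cmult
  smooth_on_sum smooth_on_divide

section \<open>Symmetry of second derivatives\<close>

lemma second_difference_mean_value:
  fixes f :: "'a::real_normed_vector \<Rightarrow> real"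
  assumes h: "0 < h"
    and diff: "\<And>s. 0 \<le> s \<Longrightarrow> s \<le> h \<Longrightarrow>
      f differentiable at (z + s *\<^sub>R v) \<and> f differentiable at (z + h *\<^sub>R w + s *\<^sub>R v)"
  obtains \<theta> where "0 < \<theta>" "\<theta> < h"
    "f (z + h *\<^sub>R w + h *\<^sub>R v) - f (z + h *\<^sub>R v) - f (z + h *\<^sub>R w) + f z
       = h * (dirder f v (z + h *\<^sub>R w + \<theta> *\<^sub>R v) - dirder f v (z + \<theta> *\<^sub>R v))"
proof -
  define g where "g s = f (z + h *\<^sub>R w + s *\<^sub>R v) - f (z + s *\<^sub>R v)" for s
  define g' where "g' s = dirder f v (z + h *\<^sub>R w + s *\<^sub>R v) - dirder f v (z + s *\<^sub>R v)" for s
  have "(g has_real_derivative g' s) (at s)" if "0 \<le> s" "s \<le> h" for s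
    unfolding g_def g'_def using diff[OF that]
    by (intro DERIV_diff has_real_derivative_dirder_line) auto
  then obtain \<theta> where "0 < \<theta>" "\<theta> < h" "g h - g 0 = (h - 0) * g' \<theta>"
    using MVT2[of 0 h g g'] h by auto
  then show ?thesis
    using that unfolding g_def g'_def by (simp add: algebra_simps)
qed

lemma has_derivative_two_point_estimate:
  assumes "(\<psi> has_derivative D) (at z)" "e > 0"
  obtains d where "d > 0" "\<And>p q. norm p < d \<Longrightarrow> norm q < d \<Longrightarrow>
    norm (\<psi> (z + p) - \<psi> (z + q) - D (p - q)) \<le> e * (norm p + norm q)"
proof -
  obtain d where d: "d > 0" "\<And>y. norm (y - z) < d \<Longrightarrow> norm (\<psi> y - \<psi> z - D (y - z)) \<le> e * norm (y - z)"
    using assms unfolding has_derivative_at_alt by blast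
  have D: "D (p - q) = D p - D q" for p q
    using assms(1) by (simp add: has_derivative_bounded_linear linear_diff bounded_linear.linear)
  have "norm (\<psi> (z + p) - \<psi> (z + q) - D (p - q)) \<le> e * (norm p + norm q)"
    if "norm p < d" "norm q < d" for p q
  proof -
    have "\<psi> (z + p) - \<psi> (z + q) - D (p - q) = (\<psi> (z + p) - \<psi> z - D p) - (\<psi> (z + q) - \<psi> z - D q)"
      by (simp add: D algebra_simps)
    also have "norm \<dots> \<le> e * norm p + e * norm q"
      using d(2)[of "z + p"] d(2)[of "z + q"] that norm_triangle_ineq4 by (smt (verit) add_diff_cancel_left')
    finally show ?thesis by (simp add: distrib_left)
  qed
  with d(1) show thesis by (rule that)
qed

lemma norm_scaleR_add_le:
  assumes "0 \<le> s" "s \<le> h" "0 \<le> c" "c \<le> h"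
  shows "norm (c *\<^sub>R w + s *\<^sub>R v) \<le> h * (norm v + norm w)"
proof -
  have "norm (c *\<^sub>R w + s *\<^sub>R v) \<le> c * norm w + s * norm v"
    using norm_triangle_ineq[of "c *\<^sub>R w" "s *\<^sub>R v"] assms by simp
  also have "\<dots> \<le> h * norm w + h * norm v"
    using assms by (intro add_mono mult_right_mono) auto
  finally show ?thesis by (simp add: algebra_simps)
qed

lemma second_difference_approx:
  fixes f :: "'a::real_normed_vector \<Rightarrow> real"
  assumes X: "open X" "z \<in> X" and f: "\<And>y. y \<in> X \<Longrightarrow> f differentiable at y"
    and \<psi>: "dirder f v differentiable at z"
    and e: "e > 0"
  shows "\<exists>d>0. \<forall>h. 0 < h \<and> h < d \<longrightarrow>
     \<bar>(f (z + h *\<^sub>R w + h *\<^sub>R v) - f (z + h *\<^sub>R v) - f (z + h *\<^sub>R w) + f z)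
        - h\<^sup>2 * dirder (dirder f v) w z\<bar> \<le> e * h\<^sup>2"
proof -
  define \<psi> where "\<psi> = dirder f v"
  define D where "D = (\<lambda>p. dirder \<psi> p z)"
  define M where "M = norm v + norm w + 1"
  have M: "M > 0" unfolding M_def by (simp add: add_nonneg_pos)
  obtain r where r: "r > 0" "ball z r \<subseteq> X" using X openE by blast
  have D: "(\<psi> has_derivative D) (at z)" unfolding D_def \<psi>_def by (rule has_derivative_dirder[OF \<psi>])
  moreover have "e / (2 * M) > 0" using e M by simp
  ultimately obtain d1 where d1: "d1 > 0" "\<And>p q. norm p < d1 \<Longrightarrow> norm q < d1 \<Longrightarrow>
      norm (\<psi> (z + p) - \<psi> (z + q) - D (p - q)) \<le> e / (2 * M) * (norm p + norm q)"
    by (rule has_derivative_two_point_estimate) blast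
  show ?thesis
  proof (intro exI[of _ "min d1 r / M"] conjI allI impI)
    show "min d1 r / M > 0" using d1 r M by simp
    fix h :: real assume h: "0 < h \<and> h < min d1 r / M"
    then have hM: "h * M < d1" "h * M < r"
      using M by (auto simp: field_simps)
    have small: "norm (c *\<^sub>R w + s *\<^sub>R v) \<le> h * M" if "0 \<le> s" "s \<le> h" "0 \<le> c" "c \<le> h" for s c
      using norm_scaleR_add_le[OF that] h unfolding M_def by (smt (verit) mult_left_mono)
    have "z + (c *\<^sub>R w + s *\<^sub>R v) \<in> X" if "0 \<le> s" "s \<le> h" "0 \<le> c" "c \<le> h" for s c
      using small[OF that] hM r(2) by (metis add_diff_cancel_left' dist_commute dist_norm mem_ball order_le_less_trans subsetD)
    from this[of _ 0] this[of _ h] h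
    obtain \<theta> where \<theta>: "0 < \<theta>" "\<theta> < h"
      and \<Delta>: "f (z + h *\<^sub>R w + h *\<^sub>R v) - f (z + h *\<^sub>R v) - f (z + h *\<^sub>R w) + f z
          = h * (\<psi> (z + (h *\<^sub>R w + \<theta> *\<^sub>R v)) - \<psi> (z + (0 *\<^sub>R w + \<theta> *\<^sub>R v)))"
      using second_difference_mean_value[of h f z v w] f unfolding \<psi>_def by (auto simp: add.assoc)
    have "D ((h *\<^sub>R w + \<theta> *\<^sub>R v) - (0 *\<^sub>R w + \<theta> *\<^sub>R v)) = h * D w"
      using linear_cmul[OF bounded_linear.linear[OF has_derivative_bounded_linear[OF D]]] by simp
    with d1(2)[of "h *\<^sub>R w + \<theta> *\<^sub>R v" "0 *\<^sub>R w + \<theta> *\<^sub>R v"] small[of \<theta> h] small[of \<theta> 0] \<theta> hM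
    have "\<bar>\<psi> (z + (h *\<^sub>R w + \<theta> *\<^sub>R v)) - \<psi> (z + (0 *\<^sub>R w + \<theta> *\<^sub>R v)) - h * D w\<bar> \<le> e / (2 * M) * (2 * (h * M))"
      by (smt (verit, best) e M divide_pos_pos mult_left_mono real_norm_def)
    then have "\<bar>h * (\<psi> (z + (h *\<^sub>R w + \<theta> *\<^sub>R v)) - \<psi> (z + (0 *\<^sub>R w + \<theta> *\<^sub>R v))) - h\<^sup>2 * D w\<bar>
        \<le> h * (e / (2 * M) * (2 * (h * M)))"
      using h by (simp add: power2_eq_square abs_mult right_diff_distrib[symmetric] mult.assoc mult_left_mono)
    also have "\<dots> = e * h\<^sup>2"
      using M by (simp add: field_simps power2_eq_square)
    finally show "\<bar>(f (z + h *\<^sub>R w + h *\<^sub>R v) - f (z + h *\<^sub>R v) - f (z + h *\<^sub>R w) + f z)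
        - h\<^sup>2 * dirder (dirder f v) w z\<bar> \<le> e * h\<^sup>2"
      unfolding \<Delta> D_def \<psi>_def .
  qed
qed

text \<open>Both mixed derivatives are limits of the same second difference divided by \<open>h\<^sup>2\<close>.\<close>

lemma dirder_dirder_commute:
  fixes f :: "'a::real_normed_vector \<Rightarrow> real"
  assumes X: "open X" "z \<in> X" and f: "\<And>y. y \<in> X \<Longrightarrow> f differentiable at y"
    and "dirder f v differentiable at z" "dirder f w differentiable at z"
  shows "dirder (dirder f v) w z = dirder (dirder f w) v z"
proof (rule ccontr)
  define A where "A = dirder (dirder f v) w z"
  define B where "B = dirder (dirder f w) v z"
  define \<Delta> where "\<Delta> h = f (z + h *\<^sub>R w + h *\<^sub>R v) - f (z + h *\<^sub>R v) - f (z + h *\<^sub>R w) + f z" for h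
  have \<Delta>_sym: "f (z + h *\<^sub>R v + h *\<^sub>R w) - f (z + h *\<^sub>R w) - f (z + h *\<^sub>R v) + f z = \<Delta> h" for h
    unfolding \<Delta>_def by (simp add: algebra_simps)
  assume "dirder (dirder f v) w z \<noteq> dirder (dirder f w) v z"
  then have e: "\<bar>A - B\<bar> / 4 > 0" unfolding A_def B_def by simp
  obtain d1 where d1: "d1 > 0" "\<forall>h. 0 < h \<and> h < d1 \<longrightarrow> \<bar>\<Delta> h - h\<^sup>2 * A\<bar> \<le> \<bar>A - B\<bar> / 4 * h\<^sup>2"
    using second_difference_approx[OF X f assms(4) e, of w] unfolding A_def \<Delta>_def by blast
  obtain d2 where d2: "d2 > 0" "\<forall>h. 0 < h \<and> h < d2 \<longrightarrow> \<bar>\<Delta> h - h\<^sup>2 * B\<bar> \<le> \<bar>A - B\<bar> / 4 * h\<^sup>2"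
    using second_difference_approx[OF X f assms(5) e, of v] unfolding B_def \<Delta>_sym by blast
  define h where "h = min d1 d2 / 2"
  have h: "0 < h" "h < d1" "h < d2" unfolding h_def using d1 d2 by auto
  have "h\<^sup>2 * \<bar>A - B\<bar> = \<bar>h\<^sup>2 * A - h\<^sup>2 * B\<bar>"
    by (simp add: abs_mult right_diff_distrib[symmetric])
  also have "\<dots> \<le> \<bar>A - B\<bar> / 2 * h\<^sup>2"
    using d1(2)[rule_format, of h] d2(2)[rule_format, of h] h by linarith
  finally have "\<bar>A - B\<bar> * h\<^sup>2 \<le> 0" by (simp add: field_simps)
  then show False using e h(1) by (simp add: mult_le_0_iff)
qed

lemma smooth_on_dirder_commute:
  fixes f :: "'a::real_normed_vector \<Rightarrow> real"
  assumes "smooth_on S f" "z \<in> S"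
  shows "dirder (dirder f v) w z = dirder (dirder f w) v z"
  using assms by (intro dirder_dirder_commute[OF smooth_on_open])
    (auto intro: smooth_on_differentiable smooth_on_dirder)

lemma smooth_on_dirder3_commute:
  fixes f :: "'a::real_normed_vector \<Rightarrow> real"
  assumes f: "smooth_on S f" and z: "z \<in> S"
  shows "dirder (dirder (dirder f a) b) c z = dirder (dirder (dirder f c) a) b z"
proof -
  have "dirder (dirder (dirder f a) b) c z = dirder (dirder (dirder f a) c) b z"
    using smooth_on_dirder[OF f] z by (rule smooth_on_dirder_commute)
  also have "\<dots> = dirder (dirder (dirder f c) a) b z"
    using z smooth_on_dirder_commute[OF f]
      smooth_on_differentiable[OF smooth_on_dirder[OF smooth_on_dirder[OF f]]]
    by (intro dirder_cong_open[OF smooth_on_open[OF f]]) auto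
  finally show ?thesis .
qed

section \<open>Periodic functions on the unit cell\<close>

lemma unit_cell_inter_halfspace_le:
  "unit_cell \<inter> {x::real^'n. x \<bullet> axis j 1 \<le> s} = cbox 0 (\<chi> i. if i = j then min 1 s else 1)"
  unfolding unit_cell_def set_eq_iff
  by (simp add: mem_box_cart inner_axis) (intro allI iffI; auto split: if_splits)

lemma unit_cell_inter_halfspace_ge:
  "unit_cell \<inter> {x::real^'n. x \<bullet> axis j 1 \<ge> s} = cbox (\<chi> i. if i = j then max 0 s else 0) (\<chi> i. 1)"
  unfolding unit_cell_def set_eq_iff
  by (simp add: mem_box_cart inner_axis) (intro allI iffI; auto split: if_splits)

lemma integral_unit_cell_split:
  fixes h :: "real^'n \<Rightarrow> real"
  assumes "h integrable_on unit_cell" "0 \<le> s" "s \<le> 1"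
  shows "integral unit_cell h = integral (cbox 0 (\<chi> i. if i = j then s else 1)) h
           + integral (cbox (\<chi> i. if i = j then s else 0) (\<chi> i. 1)) h"
  using integral_split[OF assms(1)[unfolded unit_cell_def], of "axis j 1" s]
  unfolding unit_cell_def[symmetric] unit_cell_inter_halfspace_le unit_cell_inter_halfspace_ge
    min_absorb2[OF assms(3)] max_absorb2[OF assms(2)]
  by simp

lemma integral_cbox_translate:
  fixes h :: "real^'n \<Rightarrow> real"
  assumes "continuous_on UNIV h"
  shows "integral (cbox p q) (\<lambda>x. h (x + c)) = integral (cbox (p + c) (q + c)) h"
proof -
  have "(h has_integral integral (cbox (p + c) (q + c)) h) (cbox (p + c) (q + c))"
    using assms by (intro integrable_integral integrable_continuous) (auto intro: continuous_on_subset)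
  from has_integral_affinity[OF this, of 1 c]
  have "((\<lambda>x. h (x + c)) has_integral integral (cbox (p + c) (q + c)) h)
          ((\<lambda>x. x + - c) ` cbox (p + c) (q + c))" by simp
  moreover have "(\<lambda>x. x + - c) ` cbox (p + c) (q + c) = cbox p q"
    using cbox_translation[of "-c" "p + c" "q + c"] by (simp add: add.commute)
  ultimately show ?thesis by (simp add: integral_unique)
qed

lemma integrable_on_unit_cell:
  fixes h :: "real^'n \<Rightarrow> real"
  assumes "continuous_on UNIV h"
  shows "h integrable_on unit_cell"
  unfolding unit_cell_def by (intro integrable_continuous continuous_on_subset[OF assms]) simp

text \<open>Translating by \<open>s\<close> along a period moves the slab \<open>[1 - s, 1]\<close> of the cell onto
  \<open>[0, s]\<close> and the rest onto \<open>[s, 1]\<close>.\<close>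

lemma integral_unit_cell_translate_nonneg:
  fixes h :: "real^'n \<Rightarrow> real"
  assumes cont: "continuous_on UNIV h" and per: "\<And>x. h (x + axis j 1) = h x"
    and s: "0 \<le> s" "s \<le> 1"
  shows "integral unit_cell (\<lambda>x. h (x + s *\<^sub>R axis j 1)) = integral unit_cell h"
proof -
  let ?e = "axis j 1 :: real^'n"
  have cont': "continuous_on UNIV (\<lambda>x. h (x + c))" for c
    by (intro continuous_on_compose2[OF cont]) (auto intro!: continuous_intros)
  have per': "h (x + s *\<^sub>R ?e) = h (x + (s - 1) *\<^sub>R ?e)" for x
    using per[of "x + (s - 1) *\<^sub>R ?e"] by (simp add: algebra_simps)
  have "integral unit_cell (\<lambda>x. h (x + s *\<^sub>R ?e))
      = integral (cbox 0 (\<chi> i. if i = j then 1 - s else 1)) (\<lambda>x. h (x + s *\<^sub>R ?e))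
        + integral (cbox (\<chi> i. if i = j then 1 - s else 0) (\<chi> i. 1)) (\<lambda>x. h (x + s *\<^sub>R ?e))"
    by (rule integral_unit_cell_split[OF integrable_on_unit_cell[OF cont']]) (use s in auto)
  also have "\<dots> = integral (cbox 0 (\<chi> i. if i = j then 1 - s else 1)) (\<lambda>x. h (x + s *\<^sub>R ?e))
        + integral (cbox (\<chi> i. if i = j then 1 - s else 0) (\<chi> i. 1)) (\<lambda>x. h (x + (s - 1) *\<^sub>R ?e))"
    by (simp only: per')
  also have "\<dots> = integral (cbox (\<chi> i. if i = j then s else 0) (\<chi> i. 1)) h
        + integral (cbox 0 (\<chi> i. if i = j then s else 1)) h"
  proof -
    have "0 + s *\<^sub>R ?e = (\<chi> i. if i = j then s else 0)"
      "(\<chi> i. if i = j then 1 - s else 1) + s *\<^sub>R ?e = (\<chi> i. 1)"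
      "(\<chi> i. if i = j then 1 - s else 0) + (s - 1) *\<^sub>R ?e = 0"
      "(\<chi> i. 1) + (s - 1) *\<^sub>R ?e = (\<chi> i. if i = j then s else 1)"
      by (simp_all add: vec_eq_iff axis_def)
    then show ?thesis unfolding integral_cbox_translate[OF cont] by simp
  qed
  also have "\<dots> = integral unit_cell h"
    using integral_unit_cell_split[OF integrable_on_unit_cell[OF cont] s, where j = j] by simp
  finally show ?thesis .
qed

lemma integral_unit_cell_translate:
  fixes h :: "real^'n \<Rightarrow> real"
  assumes cont: "continuous_on UNIV h" and per: "\<And>x. h (x + axis j 1) = h x"
    and s: "-1 \<le> s" "s \<le> 1"
  shows "integral unit_cell (\<lambda>x. h (x + s *\<^sub>R axis j 1)) = integral unit_cell h"
proof (cases "s \<ge> 0")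
  case True
  then show ?thesis using integral_unit_cell_translate_nonneg[OF cont per] s by simp
next
  case False
  have "h (x + s *\<^sub>R axis j 1) = h (x + (s + 1) *\<^sub>R axis j 1)" for x
    using per[of "x + s *\<^sub>R axis j 1"] by (simp add: algebra_simps)
  then show ?thesis using integral_unit_cell_translate_nonneg[OF cont per, of "s + 1"] s False by simp
qed

text \<open>The integral over the cell of the translate by \<open>s\<close> is constant in \<open>s\<close>, while by
  differentiation under the integral sign its derivative at \<open>0\<close> is the integral of the derivative.\<close>

lemma integral_unit_cell_dirder_periodic:
  fixes h :: "real^'n \<Rightarrow> real"
  assumes d: "\<And>y. h differentiable at y"
    and c: "continuous_on UNIV (dirder h (axis j 1))"
    and per: "\<And>x. h (x + axis j 1) = h x"
  shows "integral unit_cell (dirder h (axis j 1)) = 0"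
proof -
  let ?e = "axis j 1 :: real^'n"
  let ?F = "\<lambda>s. integral unit_cell (\<lambda>x. h (x + s *\<^sub>R ?e))"
  have cont: "continuous_on UNIV h"
    using d differentiable_imp_continuous_within continuous_at_imp_continuous_on by blast
  have "(?F has_field_derivative integral unit_cell (\<lambda>x. dirder h ?e (x + 0 *\<^sub>R ?e))) (at 0 within {-1<..<1})"
    unfolding unit_cell_def
  proof (rule leibniz_rule_field_derivative)
    show "((\<lambda>s. h (x + s *\<^sub>R ?e)) has_field_derivative dirder h ?e (x + s *\<^sub>R ?e)) (at s within {-1<..<1})"
      for s x
      using has_real_derivative_dirder_line[OF d] by (rule has_field_derivative_at_within)
    show "(\<lambda>x. h (x + s *\<^sub>R ?e)) integrable_on cbox 0 (\<chi> i. 1)" for s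
      by (rule integrable_continuous, rule continuous_on_compose2[OF cont]) (auto intro!: continuous_intros)
    have "continuous_on ({-1<..<1} \<times> cbox 0 (\<chi> i. 1)) (\<lambda>p. dirder h ?e (snd p + fst p *\<^sub>R ?e))"
      by (rule continuous_on_compose2[OF c]) (auto intro!: continuous_intros)
    then show "continuous_on ({-1<..<1} \<times> cbox 0 (\<chi> i. 1)) (\<lambda>(s, x). dirder h ?e (x + s *\<^sub>R ?e))"
      by (simp add: split_def)
  qed auto
  then have "(?F has_field_derivative integral unit_cell (dirder h ?e)) (at 0)"
    by (simp add: at_within_open[of 0 "{-1<..<1}"])
  moreover have "(?F has_field_derivative 0) (at 0)"
  proof (rule has_field_derivative_transform_within_open[OF DERIV_const open_greaterThanLessThan])
    show "integral unit_cell h = ?F s" if "s \<in> {-1<..<1}" for s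
      using integral_unit_cell_translate[OF cont per, of s] that by simp
  qed simp
  ultimately show ?thesis by (rule DERIV_unique)
qed

lemma periodic_field_dirder:
  fixes f :: "real^'n \<Rightarrow> 'b::real_normed_vector"
  assumes per: "periodic_field f" and d: "\<And>x. f differentiable at x"
  shows "periodic_field (dirder f v)"
  unfolding periodic_field_def
proof (intro allI)
  fix x :: "real^'n" and i :: 'n
  have "((\<lambda>y. y + axis i 1) has_derivative (\<lambda>v. v)) (at x)"
    by (auto intro!: derivative_eq_intros)
  from has_derivative_compose[OF this has_derivative_dirder[OF d[of "x + axis i 1"]]]
  have "((\<lambda>y. f (y + axis i 1)) has_derivative (\<lambda>v. dirder f v (x + axis i 1))) (at x)"
    by (simp add: o_def)
  then show "dirder f v (x + axis i 1) = dirder f v x"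
    using per unfolding periodic_field_def by (simp add: dirder_eqI)
qed

lemma integral_unit_cell_by_parts:
  fixes f g :: "real^'n \<Rightarrow> real"
  assumes smooth: "smooth_on UNIV f" "smooth_on UNIV g"
    and per: "periodic_field f" "periodic_field g"
  shows "integral unit_cell (\<lambda>x. g x * dirder f (axis j 1) x)
       = - integral unit_cell (\<lambda>x. dirder g (axis j 1) x * f x)"
proof -
  let ?e = "axis j 1 :: real^'n"
  have gf: "smooth_on UNIV (\<lambda>x. g x * f x)"
    using smooth by (rule smooth_on_mult[rotated])
  have product_rule: "dirder (\<lambda>x. g x * f x) ?e = (\<lambda>x. g x * dirder f ?e x + dirder g ?e x * f x)"
    using smooth by (intro ext dirder_mult) (auto intro: smooth_on_differentiable)
  have "integral unit_cell (\<lambda>x. g x * dirder f ?e x) + integral unit_cell (\<lambda>x. dirder g ?e x * f x)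
      = integral unit_cell (dirder (\<lambda>x. g x * f x) ?e)"
    unfolding product_rule using smooth by (subst integral_add[symmetric])
      (auto intro!: integrable_on_unit_cell smooth_on_continuous_on smooth_on_intros)
  also have "\<dots> = 0"
  proof (rule integral_unit_cell_dirder_periodic)
    show "(\<lambda>x. g x * f x) differentiable at y" for y
      using gf by (rule smooth_on_differentiable) simp
    show "continuous_on UNIV (dirder (\<lambda>x. g x * f x) ?e)"
      using gf by (intro smooth_on_continuous_on smooth_on_dirder) auto
    show "g (x + ?e) * f (x + ?e) = g x * f x" for x
      using per unfolding periodic_field_def by simp
  qed
  finally show ?thesis by (simp add: eq_neg_iff_add_eq_0)
qed

section \<open>Space-time fields\<close>

text \<open>Partial derivatives of space-time fields are taken as directional derivatives, so that the
  calculus rules above apply to them.\<close>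

abbreviation xder :: "'n::finite \<Rightarrow> (real \<times> (real^'n) \<Rightarrow> real) \<Rightarrow> real \<times> (real^'n) \<Rightarrow> real" where
  "xder i F \<equiv> dirder F (0, axis i 1)"

abbreviation tder :: "(real \<times> (real^'n::finite) \<Rightarrow> real) \<Rightarrow> real \<times> (real^'n) \<Rightarrow> real" where
  "tder F \<equiv> dirder F (1, 0)"

lemma has_derivative_slice:
  fixes F :: "real \<times> 'a::real_normed_vector \<Rightarrow> 'b::real_normed_vector"
  assumes "F differentiable at (t, x)"
  shows "((\<lambda>y. F (t, y)) has_derivative (\<lambda>v. dirder F (0, v) (t, x))) (at x)"
proof -
  have "((\<lambda>y. (t, y)) has_derivative (\<lambda>v. (0, v))) (at x)"
    by (auto intro!: derivative_eq_intros)
  from has_derivative_compose[OF this has_derivative_dirder[OF assms]] show ?thesis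
    by (simp add: o_def)
qed

lemma dirder_slice:
  fixes F :: "real \<times> 'a::real_normed_vector \<Rightarrow> 'b::real_normed_vector"
  assumes "F differentiable at (t, x)"
  shows "dirder (\<lambda>y. F (t, y)) v x = dirder F (0, v) (t, x)"
  by (rule dirder_eqI[OF has_derivative_slice[OF assms]])

lemma differentiable_slice:
  fixes F :: "real \<times> 'a::real_normed_vector \<Rightarrow> 'b::real_normed_vector"
  assumes "F differentiable at (t, x)"
  shows "(\<lambda>y. F (t, y)) differentiable at x"
  using has_derivative_slice[OF assms] differentiable_def by blast

lemma differentiable_upto_slice:
  fixes F :: "real \<times> 'a::real_normed_vector \<Rightarrow> 'b::real_normed_vector"
  shows "differentiable_upto (I \<times> UNIV) k F \<Longrightarrow> t \<in> I \<Longrightarrow> differentiable_upto UNIV k (\<lambda>x. F (t, x))"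
proof (induction k arbitrary: F)
  case 0
  then show ?case by (auto intro: differentiable_slice)
next
  case (Suc k)
  have "dirder (\<lambda>x. F (t, x)) v = (\<lambda>x. dirder F (0, v) (t, x))" for v
    using Suc.prems by (intro ext dirder_slice) auto
  then show ?case using Suc by (auto intro: differentiable_slice)
qed

lemma smooth_on_slice:
  fixes F :: "real \<times> 'a::real_normed_vector \<Rightarrow> 'b::real_normed_vector"
  shows "smooth_on (I \<times> UNIV) F \<Longrightarrow> t \<in> I \<Longrightarrow> smooth_on UNIV (\<lambda>x. F (t, x))"
  unfolding smooth_on_iff_differentiable_upto using differentiable_upto_slice by blast

lemma pd_slice:
  fixes F :: "real \<times> (real^'n) \<Rightarrow> real"
  assumes "F differentiable at (t, x)" "\<And>y. f y = F (t, y)"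
  shows "pd i f x = xder i F (t, x)"
proof -
  have "((\<lambda>s. F ((t, x) + s *\<^sub>R (0, axis i 1))) has_real_derivative xder i F ((t, x) + 0 *\<^sub>R (0, axis i 1))) (at 0)"
    by (rule has_real_derivative_dirder_line) (simp add: assms(1))
  then have "((\<lambda>s. f (x + s *\<^sub>R axis i 1)) has_real_derivative xder i F (t, x)) (at 0)"
    by (simp add: assms(2))
  then show ?thesis unfolding pd_def by (rule DERIV_imp_deriv)
qed

lemma has_real_derivative_slice_time:
  fixes F :: "real \<times> (real^'n) \<Rightarrow> real"
  assumes "F differentiable at (t, x)"
  shows "((\<lambda>s. F (s, x)) has_real_derivative tder F (t, x)) (at t)"
  using has_real_derivative_dirder_line[of F "(0, x)" t "(1, 0)"] assms by simp

lemma dt_slice: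
  fixes F :: "real \<times> (real^'n) \<Rightarrow> real"
  assumes "open I" "t \<in> I" "F differentiable at (t, x)" "\<And>s y. s \<in> I \<Longrightarrow> g s y = F (s, y)"
  shows "dt g t x = tder F (t, x)"
proof -
  have "((\<lambda>s. g s x) has_real_derivative tder F (t, x)) (at t)"
    using has_real_derivative_slice_time[OF assms(3)]
    by (rule has_field_derivative_transform_within_open[OF _ assms(1,2)]) (simp add: assms(4))
  then show ?thesis unfolding dt_def by (rule DERIV_imp_deriv)
qed

lemma periodic_field_slice_dirder:
  fixes F :: "real \<times> (real^'n) \<Rightarrow> real"
  assumes "smooth_on (I \<times> UNIV) F" "t \<in> I" "periodic_field (\<lambda>x. F (t, x))"
  shows "periodic_field (\<lambda>x. dirder F (0, v) (t, x))"
proof -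
  have "(\<lambda>x. dirder F (0, v) (t, x)) = dirder (\<lambda>x. F (t, x)) v"
    using assms by (intro ext dirder_slice[symmetric] smooth_on_differentiable) auto
  then show ?thesis
    using assms by (auto intro: periodic_field_dirder smooth_on_differentiable smooth_on_slice)
qed

lemma integrable_on_unit_cell_slice:
  fixes F :: "real \<times> (real^'n) \<Rightarrow> real"
  assumes "smooth_on (I \<times> UNIV) F" "t \<in> I"
  shows "(\<lambda>x. F (t, x)) integrable_on unit_cell"
  using smooth_on_continuous_on[OF smooth_on_slice[OF assms] subset_UNIV] by (rule integrable_on_unit_cell)

lemma integral_unit_cell_slice_by_parts:
  fixes F G :: "real \<times> (real^'n) \<Rightarrow> real"
  assumes smooth: "smooth_on (I \<times> UNIV) F" "smooth_on (I \<times> UNIV) G" and t: "t \<in> I"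
    and per: "periodic_field (\<lambda>x. F (t, x))" "periodic_field (\<lambda>x. G (t, x))"
  shows "integral unit_cell (\<lambda>x. G (t, x) * xder j F (t, x))
       = - integral unit_cell (\<lambda>x. xder j G (t, x) * F (t, x))"
proof -
  have "xder j H (t, x) = dirder (\<lambda>x. H (t, x)) (axis j 1) x" if "smooth_on (I \<times> UNIV) H" for H x
    using smooth_on_differentiable[OF that] t by (intro dirder_slice[symmetric]) simp
  with smooth show ?thesis
    using integral_unit_cell_by_parts[OF smooth_on_slice[OF smooth(1) t] smooth_on_slice[OF smooth(2) t] per]
    by simp
qed

lemma has_real_derivative_integral_unit_cell:
  fixes F :: "real \<times> (real^'n) \<Rightarrow> real"
  assumes smooth: "smooth_on (I \<times> UNIV) F" and t: "t \<in> I"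
  shows "((\<lambda>s. integral unit_cell (\<lambda>x. F (s, x))) has_real_derivative
           integral unit_cell (\<lambda>x. tder F (t, x))) (at t)"
proof -
  have "open I"
    using open_image_fst[OF smooth_on_open[OF smooth]] t by auto
  then obtain r where r: "r > 0" "ball t r \<subseteq> I"
    using t openE by blast
  have "((\<lambda>s. integral (cbox 0 (\<chi> i. 1)) (\<lambda>x. F (s, x))) has_real_derivative
          integral (cbox 0 (\<chi> i. 1)) (\<lambda>x. tder F (t, x))) (at t within ball t r)"
  proof (rule leibniz_rule_field_derivative)
    fix s x assume "s \<in> ball t r"
    then have s: "s \<in> I" using r(2) by blast
    have "F differentiable at (s, x)"
      using smooth_on_differentiable[OF smooth] s by simp
    from has_real_derivative_slice_time[OF this]
    show "((\<lambda>s. F (s, x)) has_real_derivative tder F (s, x)) (at s within ball t r)"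
      by (rule has_field_derivative_at_within)
    show "(\<lambda>x. F (s, x)) integrable_on cbox 0 (\<chi> i. 1)"
      using integrable_on_unit_cell_slice[OF smooth s] unfolding unit_cell_def .
  next
    have "continuous_on (ball t r \<times> cbox 0 (\<chi> i. 1)) (tder F)"
      using smooth_on_dirder[OF smooth] by (rule smooth_on_continuous_on) (use r(2) in blast)
    then show "continuous_on (ball t r \<times> cbox 0 (\<chi> i. 1)) (\<lambda>(s, x). tder F (s, x))"
      by (simp add: split_def)
  qed (simp_all add: r(1))
  then show ?thesis
    unfolding unit_cell_def using at_within_open[of t "ball t r"] r(1) by simp
qed

lemma integral_unit_cell_slice_sums:
  fixes F :: "'i \<Rightarrow> 'j \<Rightarrow> real \<times> (real^'n) \<Rightarrow> real" and G :: "'j \<Rightarrow> real \<times> (real^'n) \<Rightarrow> real"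
  assumes "finite A" "finite B" and smooth: "\<And>i j. smooth_on (I \<times> UNIV) (F i j)" "\<And>j. smooth_on (I \<times> UNIV) (G j)"
    and t: "t \<in> I"
  shows "integral unit_cell (\<lambda>x. (\<Sum>i\<in>A. \<Sum>j\<in>B. F i j (t, x)) + (\<Sum>j\<in>B. G j (t, x)))
    = (\<Sum>i\<in>A. \<Sum>j\<in>B. integral unit_cell (\<lambda>x. F i j (t, x))) + (\<Sum>j\<in>B. integral unit_cell (\<lambda>x. G j (t, x)))"
proof -
  have S: "open (I \<times> (UNIV :: (real^'n) set))" using smooth(2) by (rule smooth_on_open)
  have int: "(\<lambda>x. H (t, x)) integrable_on unit_cell" if "smooth_on (I \<times> UNIV) H" for H :: "real \<times> (real^'n) \<Rightarrow> real"
    using that t by (rule integrable_on_unit_cell_slice)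
  have sums: "smooth_on (I \<times> UNIV) (\<lambda>z. \<Sum>j\<in>B. F i j z)" "smooth_on (I \<times> UNIV) (\<lambda>z. \<Sum>j\<in>B. G j z)"
    "smooth_on (I \<times> UNIV) (\<lambda>z. \<Sum>i\<in>A. \<Sum>j\<in>B. F i j z)" for i
    using assms S by (auto intro!: smooth_on_sum)
  show ?thesis
    using int[OF sums(3)] int[OF sums(2)] int[OF sums(1)] int[OF smooth(1)] int[OF smooth(2)]
    by (simp add: integral_add integral_sum assms(1,2))
qed

section \<open>The quantum term in divergence form\<close>

context
  fixes S :: "'a::real_normed_vector set" and R :: "'a \<Rightarrow> real"
  assumes smooth_R: "smooth_on S R" and R_pos: "\<And>z. z \<in> S \<Longrightarrow> R z > 0"
begin

lemma dirder_ln_density: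
  assumes y: "y \<in> S"
  shows "dirder (\<lambda>z. ln (R z)) v y = 2 * dirder (\<lambda>z. sqrt (R z)) v y / sqrt (R y)"
proof -
  let ?s = "\<lambda>z. sqrt (R z)"
  have s: "smooth_on S ?s" using smooth_R R_pos by (rule smooth_on_sqrt)
  have cancel: "2 * a * d / (a * a) = 2 * d / a" if "a \<noteq> 0" for a d :: real
    using that by (simp add: field_simps)
  have "dirder R v y = dirder (\<lambda>z. ?s z * ?s z) v y"
    using y R_pos smooth_on_differentiable[OF smooth_R]
    by (intro dirder_cong_open[OF smooth_on_open[OF smooth_R]]) (auto simp: less_imp_le)
  also have "\<dots> = 2 * ?s y * dirder ?s v y"
    using dirder_mult[of ?s y ?s v] y smooth_on_differentiable[OF s] by simp
  finally have dR: "dirder R v y = 2 * ?s y * dirder ?s v y" .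
  have "dirder (\<lambda>z. ln (R z)) v y = dirder R v y / R y"
    using y R_pos smooth_on_differentiable[OF smooth_R] by (intro dirder_ln) auto
  also have "\<dots> = 2 * ?s y * dirder ?s v y / (?s y * ?s y)"
    using dR R_pos[OF y] by simp
  also have "\<dots> = 2 * dirder ?s v y / ?s y"
    using R_pos[OF y] by (intro cancel) simp
  finally show ?thesis .
qed

lemma density_mult_hessian_ln:
  assumes y: "y \<in> S"
  shows "R y * dirder (dirder (\<lambda>z. ln (R z)) v) w y
    = 2 * (sqrt (R y) * dirder (dirder (\<lambda>z. sqrt (R z)) v) w y
           - dirder (\<lambda>z. sqrt (R z)) v y * dirder (\<lambda>z. sqrt (R z)) w y)"
proof -
  let ?s = "\<lambda>z. sqrt (R z)"
  have s: "smooth_on S ?s" using smooth_R R_pos by (rule smooth_on_sqrt)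
  have s_pos: "?s z > 0" if "z \<in> S" for z using R_pos[OF that] by simp
  have "dirder (dirder (\<lambda>z. ln (R z)) v) w y = dirder (\<lambda>z. 2 * dirder ?s v z / ?s z) w y"
    using y dirder_ln_density smooth_on_differentiable[OF smooth_on_dirder[OF smooth_on_ln[OF smooth_R R_pos]]]
    by (intro dirder_cong_open[OF smooth_on_open[OF smooth_R]]) auto
  also have "\<dots> = 2 * ((dirder (dirder ?s v) w y * ?s y - dirder ?s v y * dirder ?s w y) / (?s y)\<^sup>2)"
    using y s_pos[OF y] smooth_on_differentiable[OF s] smooth_on_differentiable[OF smooth_on_dirder[OF s]]
    by (simp add: dirder_divide dirder_cmult times_divide_eq_right[symmetric] del: times_divide_eq_right)
  finally show ?thesis
    using R_pos[OF y] s_pos[OF y] by (simp add: field_simps power2_eq_square)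
qed

text \<open>With \<open>\<rho> = s\<^sup>2\<close>, both sides equal \<open>2 (s \<Delta>\<partial>\<^sub>v s - \<partial>\<^sub>v s \<Delta>s)\<close>; the third derivatives of \<open>s\<close>
  are matched by the symmetry of second derivatives.\<close>

lemma quantum_term_divergence_form:
  fixes e :: "'j \<Rightarrow> 'a"
  assumes z: "z \<in> S" and J: "finite J"
  shows "2 * R z * dirder (\<lambda>z. (\<Sum>j\<in>J. dirder (dirder (\<lambda>z. sqrt (R z)) (e j)) (e j) z) / sqrt (R z)) v z
       = (\<Sum>j\<in>J. dirder (\<lambda>z. R z * dirder (dirder (\<lambda>z. ln (R z)) v) (e j) z) (e j) z)"
proof -
  let ?s = "\<lambda>z. sqrt (R z)"
  let ?d = "\<lambda>v. dirder ?s v" and ?dd = "\<lambda>v w. dirder (dirder ?s v) w"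
  have S: "open S" using smooth_R by (rule smooth_on_open)
  have s: "smooth_on S ?s" using smooth_R R_pos by (rule smooth_on_sqrt)
  have s_pos: "?s z > 0" using R_pos[OF z] by simp
  note diff = smooth_on_differentiable[of S]
  note smooth = smooth_on_intros s smooth_R
  have "dirder (\<lambda>z. R z * dirder (dirder (\<lambda>z. ln (R z)) v) (e j) z) (e j) z
      = dirder (\<lambda>z. 2 * (?s z * ?dd v (e j) z - ?d v z * ?d (e j) z)) (e j) z" for j
    using z density_mult_hessian_ln smooth_on_ln[OF smooth_R R_pos]
    by (intro dirder_cong_open[OF S]) (auto intro!: diff smooth)
  also have "\<dots> j = 2 * (?s z * dirder (?dd v (e j)) (e j) z - ?d v z * ?dd (e j) (e j) z)" for j
    using z by (simp add: dirder_mult dirder_diff dirder_const diff smooth S)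
  also have "\<dots> j = 2 * (?s z * dirder (?dd (e j) (e j)) v z - ?d v z * ?dd (e j) (e j) z)" for j
    using smooth_on_dirder3_commute[OF s z, of "e j" "e j" v] by simp
  finally have rhs: "dirder (\<lambda>z. R z * dirder (dirder (\<lambda>z. ln (R z)) v) (e j) z) (e j) z
      = 2 * (?s z * dirder (?dd (e j) (e j)) v z - ?d v z * ?dd (e j) (e j) z)" for j .
  have "(\<Sum>j\<in>J. dirder (\<lambda>z. R z * dirder (dirder (\<lambda>z. ln (R z)) v) (e j) z) (e j) z)
      = 2 * (?s z * (\<Sum>j\<in>J. dirder (?dd (e j) (e j)) v z) - ?d v z * (\<Sum>j\<in>J. ?dd (e j) (e j) z))"
    unfolding rhs by (simp add: sum_distrib_left sum_subtractf algebra_simps)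
  moreover have "dirder (\<lambda>z. (\<Sum>j\<in>J. ?dd (e j) (e j) z) / ?s z) v z
      = ((\<Sum>j\<in>J. dirder (?dd (e j) (e j)) v z) * ?s z - (\<Sum>j\<in>J. ?dd (e j) (e j) z) * ?d v z) / (?s z)\<^sup>2"
    using z s_pos J by (simp add: dirder_divide dirder_sum diff smooth smooth_on_open[OF s])
  ultimately show ?thesis
    using R_pos[OF z] s_pos by (simp add: field_simps power2_eq_square)
qed

end

text \<open>Pointwise algebra behind the energy identity: \<open>b\<close> plays the gradient of the effective
  velocity \<open>w = u + \<mu> l\<close> and \<open>H\<close> the Hessian of \<open>log \<rho>\<close>. The \<open>H\<close>-terms cancel because \<open>\<mu>\<close> is a root
  of \<open>\<mu>\<^sup>2 - 2\<nu>\<mu> + \<kappa>\<^sup>2\<close>, the transport terms cancel between the two sums, and what remains differs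
  from the claimed form by the antisymmetric sum \<open>\<Sum>\<^sub>i\<^sub>j b\<^sub>i\<^sub>j\<^sup>2 - b\<^sub>j\<^sub>i\<^sup>2 = 0\<close>.\<close>

lemma dissipation_identity:
  fixes r \<nu> \<kappa> \<mu> :: real and uu l w :: "'n::finite \<Rightarrow> real" and a b H :: "'n \<Rightarrow> 'n \<Rightarrow> real"
  assumes root: "\<mu>\<^sup>2 - 2 * \<nu> * \<mu> + \<kappa>\<^sup>2 = 0"
    and w: "\<And>i. w i = uu i + \<mu> * l i" and b: "\<And>i j. b i j = a i j + \<mu> * H i j"
    and H: "\<And>i j. H i j = H j i"
  shows "(\<Sum>i\<in>UNIV. \<Sum>j\<in>UNIV. b i j * (- (r * uu i * uu j) + 2 * \<nu> * (r * ((a i j + a j i) / 2))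
            + \<kappa>\<^sup>2 * (r * H i j) - \<mu> * (r * a j i + r * l i * uu j)))
       + (\<Sum>j\<in>UNIV. (\<Sum>i\<in>UNIV. w i * b i j) * (r * uu j))
     = 2 * (\<nu> - \<mu>) * (r * (\<Sum>i\<in>UNIV. \<Sum>j\<in>UNIV. ((b i j + b j i) / 2)\<^sup>2))
       + \<mu> * (r * (\<Sum>i\<in>UNIV. \<Sum>j\<in>UNIV. (b i j)\<^sup>2))"
    (is "?lhs = ?rhs")
proof -
  have \<kappa>: "\<kappa>\<^sup>2 = 2 * \<nu> * \<mu> - \<mu>\<^sup>2" using root by simp
  define T where "T i j = b i j * (- (r * uu i * uu j) + 2 * \<nu> * (r * ((a i j + a j i) / 2))
            + \<kappa>\<^sup>2 * (r * H i j) - \<mu> * (r * a j i + r * l i * uu j)) + w i * b i j * (r * uu j)" for i j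
  have T: "T i j = 2 * (\<nu> - \<mu>) * (r * ((b i j + b j i) / 2)\<^sup>2) + \<mu> * (r * (b i j)\<^sup>2)
        + (\<nu> - \<mu>) * r / 2 * ((b i j)\<^sup>2 - (b j i)\<^sup>2)" for i j
    unfolding T_def \<kappa> w b H[of j i] by (simp add: field_simps power2_eq_square)
  have "(\<Sum>j\<in>UNIV. (\<Sum>i\<in>UNIV. w i * b i j) * (r * uu j)) = (\<Sum>i\<in>UNIV. \<Sum>j\<in>UNIV. w i * b i j * (r * uu j))"
    by (simp add: sum_distrib_right) (rule sum.swap)
  then have "?lhs = (\<Sum>i\<in>UNIV. \<Sum>j\<in>UNIV. T i j)"
    unfolding T_def by (simp add: sum.distrib)
  also have "\<dots> = ?rhs + (\<nu> - \<mu>) * r / 2 * (\<Sum>i\<in>UNIV. \<Sum>j\<in>UNIV. (b i j)\<^sup>2 - (b j i)\<^sup>2)"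
    unfolding T by (simp add: sum.distrib sum_distrib_left)
  also have "(\<Sum>i\<in>UNIV. \<Sum>j\<in>UNIV. (b i j)\<^sup>2 - (b j i)\<^sup>2) = 0"
    by (simp add: sum_subtractf) (rule sum.swap)
  finally show ?thesis by simp
qed

section \<open>Energy identity for the effective velocity\<close>

definition effective_velocity ::
  "real \<Rightarrow> (real \<Rightarrow> real^'n::finite \<Rightarrow> real) \<Rightarrow> (real \<Rightarrow> real^'n \<Rightarrow> real^'n) \<Rightarrow> real \<Rightarrow> real^'n \<Rightarrow> real^'n"
  where "effective_velocity \<mu> \<rho> u t x = u t x + \<mu> *\<^sub>R grad (\<lambda>y. ln (\<rho> t y)) x"

locale quantum_navier_stokes_solution =
  fixes I :: "real set"
    and \<rho> :: "real \<Rightarrow> real^'n::finite \<Rightarrow> real"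
    and u :: "real \<Rightarrow> real^'n \<Rightarrow> real^'n"
    and \<nu> \<kappa> \<mu> :: real
  assumes smooth_rho: "smooth_on (I \<times> UNIV) (\<lambda>z. \<rho> (fst z) (snd z))"
    and smooth_u: "smooth_on (I \<times> UNIV) (\<lambda>z. u (fst z) (snd z))"
    and periodic_rho: "\<And>t. t \<in> I \<Longrightarrow> periodic_field (\<rho> t)"
    and periodic_u: "\<And>t. t \<in> I \<Longrightarrow> periodic_field (u t)"
    and rho_pos: "\<And>t x. t \<in> I \<Longrightarrow> \<rho> t x > 0"
    and mass: "\<And>t x. t \<in> I \<Longrightarrow> dt \<rho> t x + (\<Sum>j\<in>UNIV. pd j (\<lambda>y. \<rho> t y * u t y $ j) x) = 0"
    and momentum: "\<And>t x i. t \<in> I \<Longrightarrow>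
        dt (\<lambda>s y. \<rho> s y * u s y $ i) t x
        + (\<Sum>j\<in>UNIV. pd j (\<lambda>y. \<rho> t y * u t y $ i * u t y $ j) x)
        - 2 * \<nu> * (\<Sum>j\<in>UNIV. pd j (\<lambda>y. \<rho> t y * symgrad (u t) i j y) x)
        = 2 * \<kappa>\<^sup>2 * \<rho> t x * pd i (\<lambda>y. lap (\<lambda>z. sqrt (\<rho> t z)) y / sqrt (\<rho> t y)) x"
    and mu_root: "\<mu>\<^sup>2 - 2 * \<nu> * \<mu> + \<kappa>\<^sup>2 = 0"
begin

text \<open>\<open>R\<close>, \<open>U i\<close>, \<open>L\<close> and \<open>W i\<close> are \<open>\<rho>\<close>, \<open>u\<^sub>i\<close>, \<open>log \<rho>\<close> and \<open>w\<^sub>i\<close> as functions of \<open>(t, x)\<close>;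
  \<open>flux i j\<close> is the flux of \<open>\<rho> w\<^sub>i\<close> in direction \<open>j\<close>.\<close>

definition R :: "real \<times> (real^'n) \<Rightarrow> real" where "R z = \<rho> (fst z) (snd z)"
definition U :: "'n \<Rightarrow> real \<times> (real^'n) \<Rightarrow> real" where "U i z = u (fst z) (snd z) $ i"
definition L :: "real \<times> (real^'n) \<Rightarrow> real" where "L z = ln (R z)"
definition M :: "'n \<Rightarrow> real \<times> (real^'n) \<Rightarrow> real" where "M i z = R z * U i z"
definition W :: "'n \<Rightarrow> real \<times> (real^'n) \<Rightarrow> real" where "W i z = U i z + \<mu> * xder i L z"
definition N :: "real \<times> (real^'n) \<Rightarrow> real" where "N z = (\<Sum>i\<in>UNIV. (W i z)\<^sup>2) / 2"
definition flux :: "'n \<Rightarrow> 'n \<Rightarrow> real \<times> (real^'n) \<Rightarrow> real" where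
  "flux i j z = - (R z * U i z * U j z) + 2 * \<nu> * (R z * ((xder j (U i) z + xder i (U j) z) / 2))
     + \<kappa>\<^sup>2 * (R z * xder j (xder i L) z) - \<mu> * xder i (M j) z"

lemma open_domain: "open (I \<times> (UNIV :: (real^'n) set))"
  using smooth_rho by (rule smooth_on_open)

lemma open_I: "open I"
  using open_image_fst[OF open_domain] by simp

lemma R_pos: "z \<in> I \<times> UNIV \<Longrightarrow> R z > 0"
  by (auto simp: R_def rho_pos)

lemma smooth_R: "smooth_on (I \<times> UNIV) R"
  using smooth_rho unfolding R_def[abs_def] .

lemma smooth_U: "smooth_on (I \<times> UNIV) (U i)"
  using smooth_on_component[OF smooth_u] unfolding U_def[abs_def] .

lemma smooth_L: "smooth_on (I \<times> UNIV) L"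
  unfolding L_def[abs_def] using smooth_R R_pos by (rule smooth_on_ln)

lemmas smooth_fields_intros = smooth_on_intros smooth_on_const smooth_R smooth_U smooth_L open_domain

lemma smooth_M: "smooth_on (I \<times> UNIV) (M i)"
  unfolding M_def[abs_def] by (simp add: smooth_fields_intros)

lemma smooth_W: "smooth_on (I \<times> UNIV) (W i)"
  unfolding W_def[abs_def] by (simp add: smooth_fields_intros)

lemma smooth_N: "smooth_on (I \<times> UNIV) N"
  unfolding N_def[abs_def] power2_eq_square by (simp add: smooth_fields_intros smooth_W)

lemma smooth_flux: "smooth_on (I \<times> UNIV) (flux i j)"
  unfolding flux_def[abs_def] by (simp add: smooth_fields_intros smooth_M)

lemmas smooth_fields = smooth_R smooth_U smooth_L smooth_M smooth_W smooth_N smooth_flux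

lemmas differentiable_field = smooth_on_differentiable[of "I \<times> UNIV"]

lemma mass_balance:
  assumes "z \<in> I \<times> UNIV"
  shows "tder R z = - (\<Sum>j\<in>UNIV. xder j (M j) z)"
proof -
  obtain t x where z: "z = (t, x)" and t: "t \<in> I" using assms by auto
  have "dt \<rho> t x = tder R (t, x)"
    by (rule dt_slice[OF open_I t differentiable_field[OF smooth_R]]) (simp_all add: t R_def)
  moreover have "pd j (\<lambda>y. \<rho> t y * u t y $ j) x = xder j (M j) (t, x)" for j
    by (rule pd_slice[OF differentiable_field[OF smooth_M]]) (simp_all add: t M_def R_def U_def)
  ultimately show ?thesis
    using mass[OF t, of x] z by (simp add: eq_neg_iff_add_eq_0)
qed

lemma momentum_balance:
  assumes "z \<in> I \<times> UNIV"
  shows "tder (M i) z = - (\<Sum>j\<in>UNIV. xder j (\<lambda>z. R z * U i z * U j z) z)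
      + 2 * \<nu> * (\<Sum>j\<in>UNIV. xder j (\<lambda>z. R z * ((xder j (U i) z + xder i (U j) z) / 2)) z)
      + \<kappa>\<^sup>2 * (\<Sum>j\<in>UNIV. xder j (\<lambda>z. R z * xder j (xder i L) z) z)"
proof -
  obtain t x where z: "z = (t, x)" and t: "t \<in> I" using assms by auto
  let ?sq = "\<lambda>z. sqrt (R z)"
  let ?Q = "\<lambda>z. (\<Sum>j\<in>UNIV. xder j (xder j ?sq) z) / ?sq z"
  have smooth_sq: "smooth_on (I \<times> UNIV) ?sq" using smooth_R R_pos by (rule smooth_on_sqrt)
  have smooth_Q: "smooth_on (I \<times> UNIV) ?Q"
    using R_pos by (intro smooth_on_divide smooth_on_sum smooth_on_dirder smooth_sq open_domain)
      (auto simp: less_imp_neq[symmetric])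
  have smooth_terms: "smooth_on (I \<times> UNIV) (\<lambda>z. R z * U i z * U j z)"
    "smooth_on (I \<times> UNIV) (\<lambda>z. R z * ((xder j (U i) z + xder i (U j) z) / 2))" for j
    by (simp_all add: smooth_fields_intros)
  have pd_u: "pd j (\<lambda>y. u t y $ i) y = xder j (U i) (t, y)" for i j y
    by (rule pd_slice[OF differentiable_field[OF smooth_U]]) (simp_all add: t U_def)
  have pd_sq: "pd j (\<lambda>y. sqrt (\<rho> t y)) = (\<lambda>y. xder j ?sq (t, y))" for j
    by (rule ext, rule pd_slice[OF differentiable_field[OF smooth_sq]]) (simp_all add: t R_def)
  have lap: "lap (\<lambda>y. sqrt (\<rho> t y)) y = (\<Sum>j\<in>UNIV. xder j (xder j ?sq) (t, y))" for y
    unfolding lap_def pd_sq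
    by (intro sum.cong refl pd_slice differentiable_field smooth_on_dirder smooth_sq) (simp add: t)
  have dt_M: "dt (\<lambda>s y. \<rho> s y * u s y $ i) t x = tder (M i) (t, x)"
    by (rule dt_slice[OF open_I t differentiable_field[OF smooth_M]]) (simp_all add: t M_def R_def U_def)
  have pd_convection: "pd j (\<lambda>y. \<rho> t y * u t y $ i * u t y $ j) x = xder j (\<lambda>z. R z * U i z * U j z) (t, x)" for j
    by (rule pd_slice[OF differentiable_field[OF smooth_terms(1)]]) (simp_all add: t R_def U_def)
  have pd_viscous: "pd j (\<lambda>y. \<rho> t y * symgrad (u t) i j y) x
      = xder j (\<lambda>z. R z * ((xder j (U i) z + xder i (U j) z) / 2)) (t, x)" for j
    by (rule pd_slice[OF differentiable_field[OF smooth_terms(2)]]) (simp_all add: t R_def symgrad_def pd_u)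
  have pd_quantum: "pd i (\<lambda>y. lap (\<lambda>z. sqrt (\<rho> t z)) y / sqrt (\<rho> t y)) x = xder i ?Q (t, x)"
    by (rule pd_slice[OF differentiable_field[OF smooth_Q]]) (simp_all add: t R_def lap)
  have "2 * \<kappa>\<^sup>2 * \<rho> t x * xder i ?Q (t, x) = \<kappa>\<^sup>2 * (2 * R (t, x) * xder i ?Q (t, x))"
    by (simp add: R_def)
  also have "2 * R (t, x) * xder i ?Q (t, x) = (\<Sum>j\<in>UNIV. xder j (\<lambda>z. R z * xder j (xder i L) z) (t, x))"
    using quantum_term_divergence_form[OF smooth_R R_pos, of "(t, x)" UNIV "\<lambda>j. (0, axis j 1)" "(0, axis i 1)"] t
    unfolding L_def[abs_def] by simp
  finally show ?thesis
    using momentum[OF t, of i x] unfolding dt_M pd_convection pd_viscous pd_quantum z by linarith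
qed

lemma xder_R:
  assumes "y \<in> I \<times> UNIV"
  shows "xder i R y = R y * xder i L y"
  using dirder_ln[OF differentiable_field[OF smooth_R assms] R_pos[OF assms]] R_pos[OF assms]
  unfolding L_def[abs_def] by (simp add: field_simps)

lemma tder_density_W:
  assumes z: "z \<in> I \<times> UNIV"
  shows "tder (\<lambda>z. R z * W i z) z = tder (M i) z - \<mu> * (\<Sum>j\<in>UNIV. xder j (xder i (M j)) z)"
proof -
  have commute: "xder i (xder j (M j)) z = xder j (xder i (M j)) z" for j
    using smooth_M z by (rule smooth_on_dirder_commute)
  have "tder (\<lambda>z. R z * W i z) z = tder (\<lambda>z. M i z + \<mu> * xder i R z) z"
    using z xder_R by (intro dirder_cong_open[OF open_domain])
      (simp_all add: W_def M_def algebra_simps differentiable_field smooth_fields_intros smooth_W)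
  also have "\<dots> = tder (M i) z + \<mu> * xder i (tder R) z"
    using z smooth_on_dirder_commute[OF smooth_R z]
    by (simp add: dirder_arith differentiable_field smooth_fields_intros smooth_M)
  also have "xder i (tder R) z = xder i (\<lambda>z. - (\<Sum>j\<in>UNIV. xder j (M j) z)) z"
    using z mass_balance
    by (intro dirder_cong_open[OF open_domain]) (simp_all add: differentiable_field smooth_fields_intros)
  also have "\<dots> = - (\<Sum>j\<in>UNIV. xder j (xder i (M j)) z)"
    using z by (simp add: dirder_arith commute differentiable_field smooth_fields_intros smooth_M)
  finally show ?thesis by simp
qed

lemma tder_density_W_flux:
  assumes z: "z \<in> I \<times> UNIV"
  shows "tder (\<lambda>z. R z * W i z) z = (\<Sum>j\<in>UNIV. xder j (flux i j) z)"
proof -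
  have "xder j (flux i j) z = - xder j (\<lambda>z. R z * U i z * U j z) z
      + 2 * \<nu> * xder j (\<lambda>z. R z * ((xder j (U i) z + xder i (U j) z) / 2)) z
      + \<kappa>\<^sup>2 * xder j (\<lambda>z. R z * xder j (xder i L) z) z - \<mu> * xder j (xder i (M j)) z" for j
    unfolding flux_def[abs_def] using z
    by (simp add: dirder_arith dirder_divide differentiable_field smooth_fields_intros smooth_M)
  then show ?thesis
    using tder_density_W[OF z] momentum_balance[OF z]
    by (simp add: sum.distrib sum_subtractf sum_negf sum_distrib_left)
qed

lemma tder_energy_density:
  assumes z: "z \<in> I \<times> UNIV"
  shows "tder (\<lambda>z. R z * N z) z
    = (\<Sum>i\<in>UNIV. \<Sum>j\<in>UNIV. W i z * xder j (flux i j) z) + (\<Sum>j\<in>UNIV. N z * xder j (M j) z)"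
proof -
  have tder_N: "tder N z = (\<Sum>i\<in>UNIV. W i z * tder (W i) z)"
    unfolding N_def[abs_def] power2_eq_square using z
    by (simp add: dirder_arith dirder_divide differentiable_field smooth_fields_intros smooth_W
        sum.distrib[symmetric] sum_distrib_left algebra_simps)
  have "tder (\<lambda>z. R z * N z) z = R z * tder N z + tder R z * N z"
    using z by (simp add: dirder_mult differentiable_field smooth_R smooth_N)
  also have "\<dots> = (\<Sum>i\<in>UNIV. W i z * tder (\<lambda>z. R z * W i z) z) - tder R z * N z"
    using z unfolding tder_N
    by (simp add: dirder_mult differentiable_field smooth_R smooth_W N_def power2_eq_square
        sum_distrib_left sum_distrib_right sum.distrib algebra_simps)
  finally show ?thesis
    using z by (simp add: tder_density_W_flux mass_balance sum_distrib_left sum_distrib_right mult.commute)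
qed

lemma dissipation_pointwise:
  assumes z: "z \<in> I \<times> UNIV"
  shows "(\<Sum>i\<in>UNIV. \<Sum>j\<in>UNIV. xder j (W i) z * flux i j z) + (\<Sum>j\<in>UNIV. xder j N z * M j z)
    = 2 * (\<nu> - \<mu>) * (R z * (\<Sum>i\<in>UNIV. \<Sum>j\<in>UNIV. ((xder j (W i) z + xder i (W j) z) / 2)\<^sup>2))
      + \<mu> * (R z * (\<Sum>i\<in>UNIV. \<Sum>j\<in>UNIV. (xder j (W i) z)\<^sup>2))"
proof -
  have xder_M: "xder i (M j) z = R z * xder i (U j) z + R z * xder i L z * U j z" for i j
    unfolding M_def[abs_def] using z xder_R[OF z]
    by (simp add: dirder_mult differentiable_field smooth_R smooth_U)
  have xder_N: "xder j N z = (\<Sum>i\<in>UNIV. W i z * xder j (W i) z)" for j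
    unfolding N_def[abs_def] power2_eq_square using z
    by (simp add: dirder_arith dirder_divide differentiable_field smooth_fields_intros smooth_W
        sum.distrib[symmetric] sum_distrib_left algebra_simps)
  have xder_W: "xder j (W i) z = xder j (U i) z + \<mu> * xder j (xder i L) z" for i j
    unfolding W_def[abs_def] using z
    by (simp add: dirder_arith differentiable_field smooth_fields_intros)
  have hessian: "xder j (xder i L) z = xder i (xder j L) z" for i j
    using smooth_L z by (rule smooth_on_dirder_commute)
  show ?thesis
    unfolding flux_def xder_M xder_N M_def
    by (rule dissipation_identity[where r = "R z" and uu = "\<lambda>i. U i z" and l = "\<lambda>i. xder i L z"
          and w = "\<lambda>i. W i z" and a = "\<lambda>i j. xder j (U i) z" and b = "\<lambda>i j. xder j (W i) z"
          and H = "\<lambda>i j. xder j (xder i L) z", OF mu_root])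
      (simp_all add: W_def xder_W hessian)
qed

lemma periodic_slices:
  assumes t: "t \<in> I"
  shows "periodic_field (\<lambda>x. W i (t, x))" "periodic_field (\<lambda>x. flux i j (t, x))"
    "periodic_field (\<lambda>x. M j (t, x))" "periodic_field (\<lambda>x. N (t, x))"
proof -
  have R: "periodic_field (\<lambda>x. R (t, x))"
    using periodic_rho[OF t] by (simp add: R_def)
  have U: "periodic_field (\<lambda>x. U k (t, x))" for k
    using periodic_u[OF t] unfolding periodic_field_def U_def by simp
  have L: "periodic_field (\<lambda>x. L (t, x))"
    using R unfolding periodic_field_def L_def by simp
  have xder: "periodic_field (\<lambda>x. xder k F (t, x))"
    if "smooth_on (I \<times> UNIV) F" "periodic_field (\<lambda>x. F (t, x))" for k F
    using that(1) t that(2) by (rule periodic_field_slice_dirder)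
  have M: "periodic_field (\<lambda>x. M k (t, x))" for k
    using R U unfolding periodic_field_def M_def by simp
  have xder_L: "periodic_field (\<lambda>x. xder k L (t, x))" for k
    using smooth_L L by (rule xder)
  show "periodic_field (\<lambda>x. W i (t, x))"
    using U xder_L unfolding periodic_field_def W_def by simp
  then show "periodic_field (\<lambda>x. N (t, x))"
    using U xder_L unfolding periodic_field_def N_def W_def by simp
  show "periodic_field (\<lambda>x. M j (t, x))" by (rule M)
  have "periodic_field (\<lambda>x. xder k (U l) (t, x))" "periodic_field (\<lambda>x. xder k (xder l L) (t, x))"
    "periodic_field (\<lambda>x. xder k (M l) (t, x))" for k l
    using xder[OF smooth_U U] xder[OF smooth_on_dirder[OF smooth_L] xder_L] xder[OF smooth_M M] by auto
  then show "periodic_field (\<lambda>x. flux i j (t, x))"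
    using R U unfolding periodic_field_def flux_def by simp
qed

lemma energy_dissipation:
  assumes t: "t \<in> I"
  shows "integral unit_cell (\<lambda>x. tder (\<lambda>z. R z * N z) (t, x))
    = - (2 * (\<nu> - \<mu>) * integral unit_cell
            (\<lambda>x. R (t, x) * (\<Sum>i\<in>UNIV. \<Sum>j\<in>UNIV. ((xder j (W i) (t, x) + xder i (W j) (t, x)) / 2)\<^sup>2))
         + \<mu> * integral unit_cell (\<lambda>x. R (t, x) * (\<Sum>i\<in>UNIV. \<Sum>j\<in>UNIV. (xder j (W i) (t, x))\<^sup>2)))"
proof -
  let ?D1 = "\<lambda>z. R z * (\<Sum>i\<in>UNIV. \<Sum>j\<in>UNIV. ((xder j (W i) z + xder i (W j) z) / 2)\<^sup>2)"
  let ?D2 = "\<lambda>z. R z * (\<Sum>i\<in>UNIV. \<Sum>j\<in>UNIV. (xder j (W i) z)\<^sup>2)"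
  have smooth_D: "smooth_on (I \<times> UNIV) ?D1" "smooth_on (I \<times> UNIV) ?D2"
    unfolding power2_eq_square by (simp_all add: smooth_fields_intros smooth_W)
  have by_parts: "integral unit_cell (\<lambda>x. G (t, x) * xder j F (t, x))
      = - integral unit_cell (\<lambda>x. xder j G (t, x) * F (t, x))"
    if "smooth_on (I \<times> UNIV) F" "smooth_on (I \<times> UNIV) G"
      "periodic_field (\<lambda>x. F (t, x))" "periodic_field (\<lambda>x. G (t, x))" for F G j
    using that(1,2) t that(3,4) by (rule integral_unit_cell_slice_by_parts)
  have "integral unit_cell (\<lambda>x. tder (\<lambda>z. R z * N z) (t, x))
      = integral unit_cell (\<lambda>x. (\<Sum>i\<in>UNIV. \<Sum>j\<in>UNIV. W i (t, x) * xder j (flux i j) (t, x))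
          + (\<Sum>j\<in>UNIV. N (t, x) * xder j (M j) (t, x)))"
    using t by (simp add: tder_energy_density)
  also have "\<dots> = (\<Sum>i\<in>UNIV. \<Sum>j\<in>UNIV. integral unit_cell (\<lambda>x. W i (t, x) * xder j (flux i j) (t, x)))
      + (\<Sum>j\<in>UNIV. integral unit_cell (\<lambda>x. N (t, x) * xder j (M j) (t, x)))"
    using t by (intro integral_unit_cell_slice_sums[where F = "\<lambda>i j z. W i z * xder j (flux i j) z"
          and G = "\<lambda>j z. N z * xder j (M j) z", simplified]) (simp_all add: smooth_fields_intros smooth_fields)
  also have "\<dots> = - ((\<Sum>i\<in>UNIV. \<Sum>j\<in>UNIV. integral unit_cell (\<lambda>x. xder j (W i) (t, x) * flux i j (t, x)))
      + (\<Sum>j\<in>UNIV. integral unit_cell (\<lambda>x. xder j N (t, x) * M j (t, x))))"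
    by (simp add: by_parts smooth_fields periodic_slices[OF t] sum_negf)
  also have "\<dots> = - integral unit_cell (\<lambda>x. (\<Sum>i\<in>UNIV. \<Sum>j\<in>UNIV. xder j (W i) (t, x) * flux i j (t, x))
      + (\<Sum>j\<in>UNIV. xder j N (t, x) * M j (t, x)))"
    using t by (subst integral_unit_cell_slice_sums[where F = "\<lambda>i j z. xder j (W i) z * flux i j z"
          and G = "\<lambda>j z. xder j N z * M j z", simplified]) (simp_all add: smooth_fields_intros smooth_fields)
  also have "\<dots> = - integral unit_cell (\<lambda>x. 2 * (\<nu> - \<mu>) * ?D1 (t, x) + \<mu> * ?D2 (t, x))"
    using t by (simp add: dissipation_pointwise)
  also have "\<dots> = - (2 * (\<nu> - \<mu>) * integral unit_cell (\<lambda>x. ?D1 (t, x)) + \<mu> * integral unit_cell (\<lambda>x. ?D2 (t, x)))"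
    using integrable_on_unit_cell_slice[OF smooth_on_cmult[OF smooth_D(1)] t]
      integrable_on_unit_cell_slice[OF smooth_on_cmult[OF smooth_D(2)] t]
    by (simp add: integral_add)
  finally show ?thesis .
qed

theorem energy_identity:
  assumes t: "t \<in> I"
  shows "((\<lambda>s. integral unit_cell (\<lambda>x. \<rho> s x * (norm (effective_velocity \<mu> \<rho> u s x))\<^sup>2 / 2))
    has_real_derivative
      - (2 * (\<nu> - \<mu>) * integral unit_cell
            (\<lambda>x. \<rho> t x * (\<Sum>i\<in>UNIV. \<Sum>j\<in>UNIV. (symgrad (effective_velocity \<mu> \<rho> u t) i j x)\<^sup>2))
         + \<mu> * integral unit_cell
            (\<lambda>x. \<rho> t x * (\<Sum>i\<in>UNIV. \<Sum>j\<in>UNIV. (pd j (\<lambda>y. effective_velocity \<mu> \<rho> u t y $ i) x)\<^sup>2))))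
    (at t)"
proof -
  have w: "effective_velocity \<mu> \<rho> u s x $ i = W i (s, x)" if "s \<in> I" for s x i
  proof -
    have "pd i (\<lambda>y. ln (\<rho> s y)) x = xder i L (s, x)"
      by (rule pd_slice[OF differentiable_field[OF smooth_L]]) (simp_all add: that L_def R_def)
    then show ?thesis by (simp add: effective_velocity_def grad_def W_def U_def)
  qed
  have pd_w: "pd j (\<lambda>y. effective_velocity \<mu> \<rho> u t y $ i) x = xder j (W i) (t, x)" for i j x
    by (rule pd_slice[OF differentiable_field[OF smooth_W]]) (simp_all add: t w)
  have energy: "\<rho> s x * (norm (effective_velocity \<mu> \<rho> u s x))\<^sup>2 / 2 = R (s, x) * N (s, x)"
    if "s \<in> I" for s x
    by (simp add: power2_norm_eq_inner inner_vec_def w[OF that] R_def N_def power2_eq_square[symmetric])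
  have "((\<lambda>s. integral unit_cell (\<lambda>x. R (s, x) * N (s, x))) has_real_derivative
      integral unit_cell (\<lambda>x. tder (\<lambda>z. R z * N z) (t, x))) (at t)"
    using smooth_on_mult[OF smooth_R smooth_N] t by (rule has_real_derivative_integral_unit_cell)
  then have "((\<lambda>s. integral unit_cell (\<lambda>x. \<rho> s x * (norm (effective_velocity \<mu> \<rho> u s x))\<^sup>2 / 2))
      has_real_derivative integral unit_cell (\<lambda>x. tder (\<lambda>z. R z * N z) (t, x))) (at t)"
    by (rule has_field_derivative_transform_within_open[OF _ open_I t]) (simp add: energy)
  then show ?thesis
    unfolding energy_dissipation[OF t] by (simp add: symgrad_def pd_w R_def)
qed

end

theorem lemmaA3:
  fixes \<rho> :: "real \<Rightarrow> real^'n \<Rightarrow> real"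
    and u :: "real \<Rightarrow> real^'n \<Rightarrow> real^'n"
    and \<nu> \<kappa> \<mu> lam a b :: real
  assumes dim: "CARD('n) = 2 \<or> CARD('n) = 3"
    and visc: "\<nu> > \<kappa>" "\<kappa> > 0"
    and mu_def: "\<mu> = \<nu> - sqrt (\<nu>\<^sup>2 - \<kappa>\<^sup>2)"
    and lam_def: "lam = sqrt (\<nu>\<^sup>2 - \<kappa>\<^sup>2)"
    and ab: "a < b"
    and smooth_rho: "smooth_on ({a<..<b} \<times> UNIV) (\<lambda>z. \<rho> (fst z) (snd z))"
    and smooth_u: "smooth_on ({a<..<b} \<times> UNIV) (\<lambda>z. u (fst z) (snd z))"
    and per_rho: "\<And>t. t \<in> {a<..<b} \<Longrightarrow> periodic_field (\<rho> t)"
    and per_u: "\<And>t. t \<in> {a<..<b} \<Longrightarrow> periodic_field (u t)"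
    and pos: "\<And>t x. t \<in> {a<..<b} \<Longrightarrow> \<rho> t x > 0"
    and mass: "\<And>t x. t \<in> {a<..<b} \<Longrightarrow>
        dt \<rho> t x + (\<Sum>j\<in>UNIV. pd j (\<lambda>y. \<rho> t y * u t y $ j) x) = 0"
    and momentum: "\<And>t x i. t \<in> {a<..<b} \<Longrightarrow>
        dt (\<lambda>s y. \<rho> s y * u s y $ i) t x
        + (\<Sum>j\<in>UNIV. pd j (\<lambda>y. \<rho> t y * u t y $ i * u t y $ j) x)
        - 2 * \<nu> * (\<Sum>j\<in>UNIV. pd j (\<lambda>y. \<rho> t y * symgrad (u t) i j y) x)
        = 2 * \<kappa>\<^sup>2 * \<rho> t x * pd i (\<lambda>y. lap (\<lambda>z. sqrt (\<rho> t z)) y / sqrt (\<rho> t y)) x"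
  defines "w \<equiv> \<lambda>t y. u t y + \<mu> *\<^sub>R grad (\<lambda>z. ln (\<rho> t z)) y"
  shows "\<forall>t\<in>{a<..<b}.
     ((\<lambda>s. integral unit_cell (\<lambda>x. \<rho> s x * (norm (w s x))\<^sup>2 / 2)) has_real_derivative
        - (2 * lam * integral unit_cell (\<lambda>x. \<rho> t x * (\<Sum>i\<in>UNIV. \<Sum>j\<in>UNIV. (symgrad (w t) i j x)\<^sup>2))
           + \<mu> * integral unit_cell (\<lambda>x. \<rho> t x * (\<Sum>i\<in>UNIV. \<Sum>j\<in>UNIV. (pd j (\<lambda>y. w t y $ i) x)\<^sup>2))))
       (at t)"
proof -
  have "\<kappa>\<^sup>2 \<le> \<nu>\<^sup>2"
    using visc by (simp add: power_mono)
  then have "(sqrt (\<nu>\<^sup>2 - \<kappa>\<^sup>2))\<^sup>2 = \<nu>\<^sup>2 - \<kappa>\<^sup>2" by simp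
  then have root: "\<mu>\<^sup>2 - 2 * \<nu> * \<mu> + \<kappa>\<^sup>2 = 0"
    unfolding mu_def by (simp add: power2_eq_square algebra_simps)
  interpret quantum_navier_stokes_solution "{a<..<b}" \<rho> u \<nu> \<kappa> \<mu>
    using smooth_rho smooth_u per_rho per_u pos mass momentum root by unfold_locales
  have lam: "lam = \<nu> - \<mu>" unfolding lam_def mu_def by simp
  show ?thesis
    using energy_identity unfolding w_def effective_velocity_def[abs_def] lam by blast
qed

end
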